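(* Assume (H1) and (H2). The function $\widehat\varphi:(0,\infty)\to(0,\infty)$ is strictly decreasing from $+\infty$ to $0$ and $\varphi:(0,\infty)\to(0,\infty)$ is strictly increasing from $0$ to $+\infty$; let $\alpha_{01}=\widehat\varphi^{-1}(1)$ and $\alpha_{02}=\varphi^{-1}(1)$. If $$Q_0<\frac{2\pi\lambda_0\theta_m}{\bar F_1(\alpha_{01})},$$ then $\alpha_{01}<\alpha_{02}$, and for every $\alpha_0\in(\alpha_{01},\alpha_{02})$ the operator $\Psi^{\alpha_0}:\mathcal K\to\mathcal K$, $\Psi^{\alpha_0}(f_1,f_2)=(U^{\alpha_0}(f_1),W^{\alpha_0}(f_2))$, is a contraction with respect to $\|(f_1,f_2)\|=\max\{\|f_1\|,\|f_2\|\}$ and has a unique fixed point in $\mathcal K=C[0,\alpha_0]\times\mathcal M$. Equivalently, the system $f_1=U^{\alpha_0}(f_1)$, $f_2=W^{\alpha_0}(f_2)$ has a unique solution $(f_1,f_2)\in C[0,\alpha_0]\times\mathcal M$.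
   Context: Fix constants $a>0$, $Q_0>0$, $\lambda_0>0$, $\theta_m>0$ and put $D^*=\frac{Q_0}{4\pi\lambda_0\theta_m}$. For $\alpha_0>0$: $C[0,\alpha_0]$ is the Banach space of real continuous functions on $[0,\alpha_0]$ with norm $\|f\|=\max_{[0,\alpha_0]}|f|$; $C_b[\alpha_0,\infty)$ is the Banach space of bounded continuous real functions on $[\alpha_0,\infty)$ with norm $\|f\|=\sup_{[\alpha_0,\infty)}|f|$; $\mathcal M=\{f\in C_b[\alpha_0,\infty): f(\alpha_0)=0,\ \lim_{\xi\to\infty}f(\xi)=-1\}$. We are given maps $L^*,N^*$ assigning to each $f_1\in C[0,\alpha_0]$ positive continuous functions $L^*(f_1),N^*(f_1)$ on $(0,\alpha_0]$, and to each $f_2\in\mathcal M$ positive continuous functions $L^*(f_2),N^*(f_2)$ on $[\alpha_0,\infty)$. Define, for $0\le\eta\le\alpha_0$ and $\xi\ge\alpha_0$ ($\xi=\infty$ allowed as an improper integral): $E_1(0,\eta,f_1)=\exp\big(-\alpha_0 a\int_0^{\eta}\frac{N^*(f_1)(s)}{L^*(f_1)(s)}ds\big)$, $F_1(0,\eta,f_1)=\int_0^{\eta}\frac{E_1(0,s,f_1)}{s\,L^*(f_1)(s)}ds$, $E_2(\alpha_0,\xi,f_2)=\exp\big(-\alpha_0 a\int_{\alpha_0}^{\xi}\frac{N^*(f_2)(s)}{L^*(f_2)(s)}ds\big)$, $F_2(\alpha_0,\xi,f_2)=\int_{\alpha_0}^{\xi}\frac{E_2(\alpha_0,s,f_2)}{s\,L^*(f_2)(s)}ds$;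 and operators $U^{\alpha_0}(f_1)(\eta)=D^*[F_1(0,\alpha_0,f_1)-F_1(0,\eta,f_1)]$, $W^{\alpha_0}(f_2)(\xi)=-F_2(\alpha_0,\xi,f_2)/F_2(\alpha_0,\infty,f_2)$. Hypothesis (H1): there are positive constants $\mu,\nu,\beta,\sigma,L_{1m},L_{1M},N_{1m},N_{1M},L_{2m},L_{2M},N_{2m},N_{2M}$ with $\mu>\max(1,\nu)$ and $\beta>\sigma+2$ such that for all $\alpha_0>0$, all $f_1\in C[0,\alpha_0]$ and all $0<\eta\le\alpha_0$: $L_{1m}\eta^{-\mu}\le L^*(f_1)(\eta)\le L_{1M}\eta^{-\mu}$ and $N_{1m}\eta^{-\nu}\le N^*(f_1)(\eta)\le N_{1M}\eta^{-\nu}$; and for all $f_2\in\mathcal M$ and $\xi\ge\alpha_0$: $L_{2m}\xi^{\beta}\le L^*(f_2)(\xi)\le L_{2M}\xi^{\beta}$ and $N_{2m}\xi^{\sigma}\le N^*(f_2)(\xi)\le N_{2M}\xi^{\sigma}$. Hypothesis (H2): there are constants $\bar L_1,\bar N_1,\bar L_2,\bar N_2\ge0$ such that for all $\alpha_0>0$: $\sup_{0<s\le\alpha_0}|L^*(f_1)(s)-L^*(f_1^* )(s)|\le\bar L_1\|f_1-f_1^*\|$ and $\sup_{0<s\le\alpha_0}|N^*(f_1)(s)-N^*(f_1^* )(s)|\le\bar N_1\|f_1-f_1^*\|$ for all $f_1,f_1^*\in C[0,\alpha_0]$, and $\sup_{s\ge\alpha_0}|L^*(f_2)(s)-L^*(f_2^*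 )(s)|\le\bar L_2\|f_2-f_2^*\|$, $\sup_{s\ge\alpha_0}|N^*(f_2)(s)-N^*(f_2^* )(s)|\le\bar N_2\|f_2-f_2^*\|$ for all $f_2,f_2^*\in\mathcal M$. For $z>0$: $\bar F_1(z)=\frac{za}{L_{1m}^2}\Big(\frac{\bar N_1 z^{2\mu+1}}{(\mu+1)(2\mu+1)}+\frac{\bar L_1N_{1M}}{L_{1m}}\frac{z^{3\mu-\nu+1}}{(2\mu-\nu+1)(3\mu-\nu+1)}\Big)+\frac{\bar L_1}{L_{1m}^2}\frac{z^{2\mu}}{2\mu}$, $\bar F_2(z)=\frac{za}{\beta L_{2m}^2}\Big[\frac{\bar N_2}{\beta-1}\frac{1}{z^{\beta-1}}+\frac{\bar L_2N_{2M}}{L_{2m}(2\beta-\sigma-1)}\frac{1}{z^{2\beta-\sigma-1}}\Big]\frac{1}{z^{\beta}}+\frac{\bar L_2}{2\beta L_{2m}^2}\frac{1}{z^{2\beta}}$, $\varphi(z)=2D^*\bar F_1(z)$, $\widehat\varphi(z)=2L_{2M}\beta z^{\beta}\bar F_2(z)\exp\Big(\frac{aN_{2M}}{L_{2m}(\beta-\sigma-1)}\frac{1}{z^{\beta-\sigma-2}}\Big)$. *)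

theory Defs
  imports "HOL-Analysis.Analysis"
begin

definition supn :: "real set \<Rightarrow> (real \<Rightarrow> real) \<Rightarrow> real" where
  "supn S f = (SUP x\<in>S. \<bar>f x\<bar>)"

text \<open>Membership in C[0,alpha0] and in the set M (functions are represented as
  real \<Rightarrow> real; only their values on the relevant domain matter).\<close>
definition inC :: "real \<Rightarrow> (real \<Rightarrow> real) \<Rightarrow> bool" where
  "inC \<alpha>0 f \<longleftrightarrow> continuous_on {0..\<alpha>0} f"

definition inM :: "real \<Rightarrow> (real \<Rightarrow> real) \<Rightarrow> bool" where
  "inM \<alpha>0 f \<longleftrightarrow> continuous_on {\<alpha>0..} f \<and> bounded (f ` {\<alpha>0..}) \<and> f \<alpha>0 = 0
      \<and> (f \<longlongrightarrow> -1) at_top"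

definition Dstar :: "real \<Rightarrow> real \<Rightarrow> real \<Rightarrow> real" where
  "Dstar Q0 lam0 \<theta>m = Q0 / (4 * pi * lam0 * \<theta>m)"

text \<open>E_1, F_1, E_2, F_2; here L and N stand for L^*(f) and N^*(f).\<close>
definition E1 :: "real \<Rightarrow> real \<Rightarrow> (real \<Rightarrow> real) \<Rightarrow> (real \<Rightarrow> real) \<Rightarrow> real \<Rightarrow> real" where
  "E1 a \<alpha>0 L N \<eta> = exp (- (\<alpha>0 * a) * integral {0..\<eta>} (\<lambda>s. N s / L s))"

definition F1 :: "real \<Rightarrow> real \<Rightarrow> (real \<Rightarrow> real) \<Rightarrow> (real \<Rightarrow> real) \<Rightarrow> real \<Rightarrow> real" where
  "F1 a \<alpha>0 L N \<eta> = integral {0..\<eta>} (\<lambda>s. E1 a \<alpha>0 L N s / (s * L s))"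

definition E2 :: "real \<Rightarrow> real \<Rightarrow> (real \<Rightarrow> real) \<Rightarrow> (real \<Rightarrow> real) \<Rightarrow> real \<Rightarrow> real" where
  "E2 a \<alpha>0 L N \<xi> = exp (- (\<alpha>0 * a) * integral {\<alpha>0..\<xi>} (\<lambda>s. N s / L s))"

definition F2 :: "real \<Rightarrow> real \<Rightarrow> (real \<Rightarrow> real) \<Rightarrow> (real \<Rightarrow> real) \<Rightarrow> real \<Rightarrow> real" where
  "F2 a \<alpha>0 L N \<xi> = integral {\<alpha>0..\<xi>} (\<lambda>s. E2 a \<alpha>0 L N s / (s * L s))"

text \<open>F_2(alpha0, infinity, f): integral over [alpha0, oo) (nonnegative integrand,
  so this agrees with the improper integral).\<close>
definition F2inf :: "real \<Rightarrow> real \<Rightarrow> (real \<Rightarrow> real) \<Rightarrow> (real \<Rightarrow> real) \<Rightarrow> real" where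
  "F2inf a \<alpha>0 L N = integral {\<alpha>0..} (\<lambda>s. E2 a \<alpha>0 L N s / (s * L s))"

text \<open>The operators U^{alpha0} and W^{alpha0}. L1, N1 (resp. L2, N2) are the maps
  L^*, N^* on C[0,alpha0] (resp. on M), taking alpha0 and f as arguments.\<close>
definition Uop :: "real \<Rightarrow> real \<Rightarrow> real \<Rightarrow> (real \<Rightarrow> (real \<Rightarrow> real) \<Rightarrow> real \<Rightarrow> real)
    \<Rightarrow> (real \<Rightarrow> (real \<Rightarrow> real) \<Rightarrow> real \<Rightarrow> real) \<Rightarrow> (real \<Rightarrow> real) \<Rightarrow> real \<Rightarrow> real" where
  "Uop D a \<alpha>0 L1 N1 f \<eta> =
     D * (F1 a \<alpha>0 (L1 \<alpha>0 f) (N1 \<alpha>0 f) \<alpha>0 - F1 a \<alpha>0 (L1 \<alpha>0 f) (N1 \<alpha>0 f) \<eta>)"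

definition Wop :: "real \<Rightarrow> real \<Rightarrow> (real \<Rightarrow> (real \<Rightarrow> real) \<Rightarrow> real \<Rightarrow> real)
    \<Rightarrow> (real \<Rightarrow> (real \<Rightarrow> real) \<Rightarrow> real \<Rightarrow> real) \<Rightarrow> (real \<Rightarrow> real) \<Rightarrow> real \<Rightarrow> real" where
  "Wop a \<alpha>0 L2 N2 f \<xi> =
     - F2 a \<alpha>0 (L2 \<alpha>0 f) (N2 \<alpha>0 f) \<xi> / F2inf a \<alpha>0 (L2 \<alpha>0 f) (N2 \<alpha>0 f)"

definition Fbar1 :: "real \<Rightarrow> real \<Rightarrow> real \<Rightarrow> real \<Rightarrow> real \<Rightarrow> real \<Rightarrow> real \<Rightarrow> real \<Rightarrow> real" where
  "Fbar1 a \<mu> \<nu> L1m N1M L1b N1b z =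
     z * a / L1m^2 * (N1b * z powr (2*\<mu>+1) / ((\<mu>+1) * (2*\<mu>+1))
        + L1b * N1M / L1m * z powr (3*\<mu>-\<nu>+1) / ((2*\<mu>-\<nu>+1) * (3*\<mu>-\<nu>+1)))
     + L1b / L1m^2 * z powr (2*\<mu>) / (2*\<mu>)"

definition Fbar2 :: "real \<Rightarrow> real \<Rightarrow> real \<Rightarrow> real \<Rightarrow> real \<Rightarrow> real \<Rightarrow> real \<Rightarrow> real \<Rightarrow> real" where
  "Fbar2 a \<beta> \<sigma> L2m N2M L2b N2b z =
     z * a / (\<beta> * L2m^2) * (N2b / (\<beta>-1) * (1 / z powr (\<beta>-1))
        + L2b * N2M / (L2m * (2*\<beta>-\<sigma>-1)) * (1 / z powr (2*\<beta>-\<sigma>-1))) * (1 / z powr \<beta>)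
     + L2b / (2*\<beta>*L2m^2) * (1 / z powr (2*\<beta>))"

definition phi :: "real \<Rightarrow> real \<Rightarrow> real \<Rightarrow> real \<Rightarrow> real \<Rightarrow> real \<Rightarrow> real \<Rightarrow> real \<Rightarrow> real \<Rightarrow> real" where
  "phi D a \<mu> \<nu> L1m N1M L1b N1b z = 2 * D * Fbar1 a \<mu> \<nu> L1m N1M L1b N1b z"

definition phihat :: "real \<Rightarrow> real \<Rightarrow> real \<Rightarrow> real \<Rightarrow> real \<Rightarrow> real \<Rightarrow> real \<Rightarrow> real \<Rightarrow> real \<Rightarrow> real" where
  "phihat a \<beta> \<sigma> L2m L2M N2M L2b N2b z =
     2 * L2M * \<beta> * z powr \<beta> * Fbar2 a \<beta> \<sigma> L2m N2M L2b N2b z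
       * exp (a * N2M / (L2m * (\<beta>-\<sigma>-1)) * (1 / z powr (\<beta>-\<sigma>-2)))"

end

theory Submission
  imports Defs
begin

text \<open>Both operators are integral operators whose kernels depend on \<open>f\<close> only through
  \<open>L\<^sup>*(f)\<close> and \<open>N\<^sup>*(f)\<close>. By (H1) the kernels are dominated by explicit powers of the integration
  variable, and by (H2) they depend Lipschitz-continuously on \<open>f\<close>. Integrating the resulting
  majorants gives \<open>\<parallel>U f - U g\<parallel> \<le> \<phi>(\<alpha>0) \<parallel>f - g\<parallel>\<close> and, using a lower bound for
  \<open>F\<^sub>2(\<alpha>0, \<infinity>, f)\<close>, also \<open>\<parallel>W f - W g\<parallel> \<le> \<phi>hat(\<alpha>0) \<parallel>f - g\<parallel>\<close>.
  Up to positive factors \<open>\<phi>\<close> is a sum of positive powers and \<open>\<phi>hat\<close> a sum of negative powers times a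
  decreasing exponential, so \<open>\<phi>\<close> increases, \<open>\<phi>hat\<close> decreases, and both are below 1 exactly on
  \<open>(\<alpha>01, \<alpha>02)\<close>; the bound on \<open>Q0\<close> says precisely \<open>\<phi>(\<alpha>01) < 1\<close>, i.e. \<open>\<alpha>01 < \<alpha>02\<close>.
  Banach's fixed point theorem in \<open>C[0, \<alpha>0]\<close> and in \<open>\<M>\<close>, a closed set of bounded continuous
  functions, then gives the unique solution.\<close>

lemma integrable_on_Icc_iff_Ioc:
  fixes f :: "real \<Rightarrow> 'a::banach"
  shows "f integrable_on {a..b} \<longleftrightarrow> f integrable_on {a<..b}"
  by (rule integrable_spike_set_eq, rule negligible_subset[of "{a}"]) auto

lemma integral_Icc_eq_Ioc:
  fixes f :: "real \<Rightarrow> 'a::banach"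
  shows "integral {a..b} f = integral {a<..b} f"
  by (rule integral_spike_set; rule negligible_subset[of "{a}"]) auto

lemma integrable_continuous_dominated:
  fixes g h :: "real \<Rightarrow> real"
  assumes "continuous_on S g" "S \<in> sets lebesgue" "h integrable_on S" "\<And>x. x \<in> S \<Longrightarrow> \<bar>g x\<bar> \<le> h x"
  shows "g integrable_on S"
  by (rule measurable_bounded_by_integrable_imp_integrable_real
      [OF continuous_imp_measurable_on_sets_lebesgue[OF assms(1,2)] assms(3,4,2)])

lemma integrable_on_Icc_if_bounded_Ioc:
  fixes g :: "real \<Rightarrow> real"
  assumes "continuous_on {a<..b} g" "\<And>x. x \<in> {a<..b} \<Longrightarrow> \<bar>g x\<bar> \<le> C"
  shows "g integrable_on {a..b}"
proof -
  have "(\<lambda>x. C) integrable_on {a<..b}"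
    using integrable_const_ivl integrable_on_Icc_iff_Ioc by blast
  then have "g integrable_on {a<..b}"
    by (intro integrable_continuous_dominated[OF assms(1) _ _ assms(2)]) auto
  then show ?thesis using integrable_on_Icc_iff_Ioc by blast
qed

lemma integrable_on_atLeast_powr_dominated:
  fixes g :: "real \<Rightarrow> real"
  assumes "continuous_on {c..} g" "\<And>x. x \<ge> c \<Longrightarrow> \<bar>g x\<bar> \<le> K * x powr e" "e < -1" "c > 0"
  shows "g integrable_on {c..}"
proof (rule integrable_continuous_dominated[OF assms(1)])
  show "(\<lambda>x. K * x powr e) integrable_on {c..}"
    using has_integral_mult_right[OF has_integral_powr_to_inf[OF assms(3,4)]] by blast
qed (use assms in auto)

lemma continuous_on_integral_atLeast:
  fixes f :: "real \<Rightarrow> real"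
  assumes "f integrable_on {a..}"
  shows "continuous_on {a..} (\<lambda>x. integral {a..x} f)"
  unfolding continuous_on_eq_continuous_within
proof
  fix x assume "x \<in> {a..}"
  have "continuous_on {a..x+1} (\<lambda>x. integral {a..x} f)"
    by (rule indefinite_integral_continuous_1, rule integrable_on_subinterval[OF assms]) auto
  then have "continuous (at x within {a..x+1}) (\<lambda>x. integral {a..x} f)"
    using \<open>x \<in> {a..}\<close> by (simp add: continuous_on_eq_continuous_within)
  moreover have "at x within {a..} = at x within {a..x+1}"
    by (rule at_within_nhd[where S="{..<x+1}"]) auto
  ultimately show "continuous (at x within {a..}) (\<lambda>x. integral {a..x} f)" by simp
qed

lemma abs_exp_minus_diff_le:
  fixes x y :: real
  assumes "x \<ge> 0" "y \<ge> 0"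
  shows "\<bar>exp (-x) - exp (-y)\<bar> \<le> \<bar>x - y\<bar>"
proof -
  have "exp (-u) - exp (-v) \<le> v - u" if "0 \<le> u" "u \<le> v" for u v :: real
  proof -
    have "exp (-u) - exp (-v) = exp (-u) * (1 - exp (u - v))" by (simp add: right_diff_distrib flip: exp_add)
    also have "\<dots> \<le> 1 - exp (u - v)" using that by (intro mult_left_le_one_le) auto
    also have "\<dots> \<le> v - u" using exp_ge_add_one_self[of "u - v"] by linarith
    finally show ?thesis .
  qed
  from this[of x y] this[of y x] assms show ?thesis by (cases "x \<le> y") auto
qed

lemma abs_divide_diff_le:
  fixes n n' l l' :: real
  assumes "l > 0" "l' > 0"
  shows "\<bar>n / l - n' / l'\<bar> \<le> \<bar>n - n'\<bar> * (1 / l) + \<bar>n'\<bar> * \<bar>l - l'\<bar> * (1 / l) * (1 / l')"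
proof -
  have "n / l - n' / l' = (n - n') * (1 / l) + n' * (l' - l) * (1 / l) * (1 / l')"
    using assms by (simp add: field_simps)
  also have "\<bar>\<dots>\<bar> \<le> \<bar>(n - n') * (1 / l)\<bar> + \<bar>n' * (l' - l) * (1 / l) * (1 / l')\<bar>"
    by (rule abs_triangle_ineq)
  finally show ?thesis using assms by (simp add: abs_mult abs_minus_commute)
qed

lemma abs_divide_diff_le_of_le:
  fixes A A' B B' :: real
  assumes "0 \<le> A'" "A' \<le> B'" "B > 0" "B' > 0"
  shows "\<bar>A / B - A' / B'\<bar> \<le> (\<bar>A - A'\<bar> + \<bar>B - B'\<bar>) / B"
proof -
  have eq: "A / B - A' / B' = ((A - A') + (A' / B') * (B' - B)) / B"
    using assms by (simp add: field_simps)
  have q: "0 \<le> A' / B'" "A' / B' \<le> 1" using assms by auto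
  have "\<bar>(A - A') + (A' / B') * (B' - B)\<bar> \<le> \<bar>A - A'\<bar> + (A' / B') * \<bar>B' - B\<bar>"
    using q assms by (intro order_trans[OF abs_triangle_ineq]) (simp add: abs_mult)
  also have "\<dots> \<le> \<bar>A - A'\<bar> + \<bar>B - B'\<bar>"
    using q mult_left_le_one_le[of "\<bar>B' - B\<bar>" "A' / B'"] by (simp add: abs_minus_commute)
  finally show ?thesis unfolding eq using assms by (simp add: divide_right_mono)
qed

section \<open>The kernel on \<open>(0, \<alpha>0]\<close>\<close>

text \<open>\<open>L\<close> and \<open>N\<close> stand for \<open>L\<^sup>*(f)\<close> and \<open>N\<^sup>*(f)\<close>; only the parts of (H1) used below are
  assumed, with the lower bound on \<open>N\<close> weakened to \<open>N \<ge> 0\<close>.\<close>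

locale inner_coeffs =
  fixes a \<alpha>0 \<mu> \<nu> L1m N1M :: real and L N :: "real \<Rightarrow> real"
  assumes a: "a > 0" and \<alpha>0: "\<alpha>0 > 0" and \<mu>: "\<mu> > 1" "\<nu> > 0" "\<nu> < \<mu>"
    and L1m: "L1m > 0" and N1M: "N1M > 0"
    and L_lower: "\<And>s. s \<in> {0<..\<alpha>0} \<Longrightarrow> L1m * s powr (-\<mu>) \<le> L s"
    and N_bounds: "\<And>s. s \<in> {0<..\<alpha>0} \<Longrightarrow> 0 \<le> N s \<and> N s \<le> N1M * s powr (-\<nu>)"
    and continuous_L: "continuous_on {0<..\<alpha>0} L" and continuous_N: "continuous_on {0<..\<alpha>0} N"
begin

abbreviation ratio :: "real \<Rightarrow> real" where "ratio s \<equiv> N s / L s"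

abbreviation kernel :: "real \<Rightarrow> real" where "kernel s \<equiv> E1 a \<alpha>0 L N s / (s * L s)"

lemma L_pos: "s \<in> {0<..\<alpha>0} \<Longrightarrow> L s > 0"
  using L_lower[of s] L1m by (smt (verit) greaterThanAtMost_iff mult_pos_pos powr_gt_zero)

lemma inverse_L_le: assumes "s \<in> {0<..\<alpha>0}" shows "1 / L s \<le> s powr \<mu> / L1m"
proof -
  have "L1m / s powr \<mu> \<le> L s" using L_lower[OF assms] by (simp add: powr_minus divide_inverse)
  then have "L1m \<le> L s * s powr \<mu>" using assms by (simp add: divide_le_eq)
  then show ?thesis
    using L_pos[OF assms] L1m assms by (simp add: divide_le_eq le_divide_eq mult.commute)
qed

lemma ratio_bounds:
  assumes "s \<in> {0<..\<alpha>0}"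
  shows "0 \<le> ratio s" "ratio s \<le> N1M / L1m * \<alpha>0 powr (\<mu> - \<nu>)"
proof -
  show "0 \<le> ratio s" using N_bounds[OF assms] L_pos[OF assms] by simp
  have "ratio s = N s * (1 / L s)" by simp
  also have "\<dots> \<le> (N1M * s powr (-\<nu>)) * (s powr \<mu> / L1m)"
    using N_bounds[OF assms] inverse_L_le[OF assms] L_pos[OF assms] by (intro mult_mono) auto
  also have "\<dots> = N1M / L1m * s powr (\<mu> - \<nu>)" by (simp add: powr_diff powr_minus field_simps)
  also have "\<dots> \<le> N1M / L1m * \<alpha>0 powr (\<mu> - \<nu>)"
    using assms \<mu> N1M L1m by (intro mult_left_mono powr_mono2) auto
  finally show "ratio s \<le> N1M / L1m * \<alpha>0 powr (\<mu> - \<nu>)" .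
qed

lemma continuous_on_ratio: "continuous_on {0<..\<alpha>0} ratio"
  using continuous_L continuous_N L_pos by (intro continuous_intros) (auto simp: less_le)

lemma integrable_ratio: "ratio integrable_on {0..\<alpha>0}"
  by (rule integrable_on_Icc_if_bounded_Ioc[OF continuous_on_ratio,
        of "N1M / L1m * \<alpha>0 powr (\<mu> - \<nu>)"]) (metis ratio_bounds abs_of_nonneg)

lemma integrable_ratio_Icc: "t \<in> {0..\<alpha>0} \<Longrightarrow> ratio integrable_on {0..t}"
  by (rule integrable_on_subinterval[OF integrable_ratio]) auto

lemma integral_ratio_nonneg: "t \<in> {0..\<alpha>0} \<Longrightarrow> 0 \<le> integral {0..t} ratio"
  unfolding integral_Icc_eq_Ioc
  by (rule integral_nonneg)
     (use integrable_ratio_Icc integrable_on_Icc_iff_Ioc ratio_bounds in auto)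

lemma continuous_on_E1: "continuous_on {0..\<alpha>0} (E1 a \<alpha>0 L N)"
  unfolding E1_def by (intro continuous_intros indefinite_integral_continuous_1 integrable_ratio)

lemma E1_le_1: "t \<in> {0..\<alpha>0} \<Longrightarrow> E1 a \<alpha>0 L N t \<le> 1"
  unfolding E1_def using integral_ratio_nonneg[of t] a \<alpha>0 by simp

lemma kernel_bounds:
  assumes "s \<in> {0<..\<alpha>0}"
  shows "0 \<le> kernel s" "kernel s \<le> \<alpha>0 powr (\<mu> - 1) / L1m"
proof -
  have s: "s > 0" "s \<le> \<alpha>0" using assms by auto
  show "0 \<le> kernel s" using L_pos[OF assms] s by (simp add: E1_def)
  have "kernel s = E1 a \<alpha>0 L N s * (1 / L s) / s" by simp
  also have "\<dots> \<le> 1 * (s powr \<mu> / L1m) / s"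
    using E1_le_1[of s] inverse_L_le[OF assms] L_pos[OF assms] s
    by (intro divide_right_mono mult_mono) (auto simp: E1_def)
  also have "\<dots> = s powr (\<mu> - 1) / L1m" using s by (simp add: powr_diff)
  also have "\<dots> \<le> \<alpha>0 powr (\<mu> - 1) / L1m"
    using s \<mu> L1m by (intro divide_right_mono powr_mono2) auto
  finally show "kernel s \<le> \<alpha>0 powr (\<mu> - 1) / L1m" .
qed

lemma continuous_on_kernel: "continuous_on {0<..\<alpha>0} kernel"
proof -
  have "continuous_on {0<..\<alpha>0} (E1 a \<alpha>0 L N)" by (rule continuous_on_subset[OF continuous_on_E1]) auto
  moreover have "\<forall>s\<in>{0<..\<alpha>0}. s * L s \<noteq> 0" using L_pos by fastforce
  ultimately show ?thesis using continuous_L by (intro continuous_intros) auto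
qed

lemma integrable_kernel: "kernel integrable_on {0..\<alpha>0}"
  by (rule integrable_on_Icc_if_bounded_Ioc[OF continuous_on_kernel, of "\<alpha>0 powr (\<mu> - 1) / L1m"])
     (use kernel_bounds in \<open>simp only: abs_of_nonneg\<close>)

lemma continuous_on_F1: "continuous_on {0..\<alpha>0} (F1 a \<alpha>0 L N)"
  unfolding F1_def[abs_def] by (rule indefinite_integral_continuous_1[OF integrable_kernel])

end

text \<open>The two coefficient pairs belong to arguments \<open>f\<close>, \<open>g\<close>, and \<open>d\<close> stands for \<open>\<parallel>f - g\<parallel>\<close>,
  so that \<open>L_diff\<close> and \<open>N_diff\<close> are (H2).\<close>

locale inner_coeffs_pair =
  U: inner_coeffs a \<alpha>0 \<mu> \<nu> L1m N1M L N + V: inner_coeffs a \<alpha>0 \<mu> \<nu> L1m N1M L' N'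
  for a \<alpha>0 \<mu> \<nu> L1m N1M and L N L' N' :: "real \<Rightarrow> real" +
  fixes L1b N1b d :: real
  assumes L1b: "L1b \<ge> 0" and N1b: "N1b \<ge> 0" and d: "d \<ge> 0"
    and L_diff: "\<And>s. s \<in> {0<..\<alpha>0} \<Longrightarrow> \<bar>L s - L' s\<bar> \<le> L1b * d"
    and N_diff: "\<And>s. s \<in> {0<..\<alpha>0} \<Longrightarrow> \<bar>N s - N' s\<bar> \<le> N1b * d"
begin

definition ratio_dev :: "real \<Rightarrow> real" where
  "ratio_dev s = N1b*d/L1m * s powr \<mu> + N1M*L1b*d/L1m^2 * s powr (2*\<mu>-\<nu>)"

definition ratio_dev_int :: "real \<Rightarrow> real" where
  "ratio_dev_int t = N1b*d/L1m * (t powr (\<mu>+1)/(\<mu>+1))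
     + N1M*L1b*d/L1m^2 * (t powr (2*\<mu>-\<nu>+1)/(2*\<mu>-\<nu>+1))"

definition kernel_dev :: "real \<Rightarrow> real" where
  "kernel_dev s = \<alpha>0*a/L1m^2 * (N1b*d/(\<mu>+1) * s powr (2*\<mu>)
     + N1M*L1b*d/(L1m*(2*\<mu>-\<nu>+1)) * s powr (3*\<mu>-\<nu>)) + L1b*d/L1m^2 * s powr (2*\<mu>-1)"

definition kernel_dev_int :: "real \<Rightarrow> real" where
  "kernel_dev_int t = \<alpha>0*a/L1m^2 * (N1b*d/(\<mu>+1) * (t powr (2*\<mu>+1)/(2*\<mu>+1))
     + N1M*L1b*d/(L1m*(2*\<mu>-\<nu>+1)) * (t powr (3*\<mu>-\<nu>+1)/(3*\<mu>-\<nu>+1)))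
     + L1b*d/L1m^2 * (t powr (2*\<mu>-1+1)/(2*\<mu>-1+1))"

lemma ratio_diff_le:
  assumes s: "s \<in> {0<..\<alpha>0}"
  shows "\<bar>U.ratio s - V.ratio s\<bar> \<le> ratio_dev s"
proof -
  define P where "P = s powr \<mu>"
  have P: "P > 0" using s by (simp add: P_def)
  have l: "L s > 0" "L' s > 0" using U.L_pos[OF s] V.L_pos[OF s] .
  have il: "1 / L s \<le> P / L1m" "1 / L' s \<le> P / L1m"
    using U.inverse_L_le[OF s] V.inverse_L_le[OF s] by (auto simp: P_def)
  have n: "0 \<le> N' s" "N' s \<le> N1M * s powr (-\<nu>)" using V.N_bounds[OF s] by auto
  have "\<bar>U.ratio s - V.ratio s\<bar>
      \<le> \<bar>N s - N' s\<bar> * (1 / L s) + \<bar>N' s\<bar> * \<bar>L s - L' s\<bar> * (1 / L s) * (1 / L' s)"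
    by (rule abs_divide_diff_le[OF l])
  also have "\<dots> \<le> (N1b * d) * (P / L1m) + (N1M * s powr (-\<nu>)) * (L1b * d) * (P / L1m) * (P / L1m)"
    using N_diff[OF s] L_diff[OF s] il n l P U.L1m L1b d
    by (intro add_mono mult_mono) auto
  also have "\<dots> = ratio_dev s"
  proof -
    have "s powr (2*\<mu>-\<nu>) = P * P * s powr (-\<nu>)" unfolding P_def by (simp add: powr_add[symmetric])
    then show ?thesis unfolding ratio_dev_def P_def[symmetric] by (simp add: power2_eq_square)
  qed
  finally show ?thesis .
qed

lemma has_integral_ratio_dev: "t \<ge> 0 \<Longrightarrow> (ratio_dev has_integral ratio_dev_int t) {0..t}"
  unfolding ratio_dev_def[abs_def] ratio_dev_int_def using U.\<mu>
  by (intro has_integral_add has_integral_mult_right has_integral_powr_from_0) auto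

lemma E1_diff_le:
  assumes s: "s \<in> {0<..\<alpha>0}"
  shows "\<bar>E1 a \<alpha>0 L N s - E1 a \<alpha>0 L' N' s\<bar> \<le> \<alpha>0 * a * ratio_dev_int s"
proof -
  have s0: "s \<in> {0..\<alpha>0}" "s \<ge> 0" using s by auto
  have i: "U.ratio integrable_on {0<..s}" "V.ratio integrable_on {0<..s}"
    using U.integrable_ratio_Icc[OF s0(1)] V.integrable_ratio_Icc[OF s0(1)] integrable_on_Icc_iff_Ioc
    by blast+
  have "\<bar>integral {0..s} U.ratio - integral {0..s} V.ratio\<bar>
      = \<bar>integral {0<..s} (\<lambda>x. U.ratio x - V.ratio x)\<bar>"
    unfolding integral_Icc_eq_Ioc by (simp add: integral_diff[OF i])
  also have "\<dots> \<le> integral {0<..s} ratio_dev"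
  proof -
    have "ratio_dev integrable_on {0<..s}"
      using has_integral_ratio_dev[OF s0(2)] integrable_on_Icc_iff_Ioc by blast
    then show ?thesis
      using integral_norm_bound_integral[OF integrable_diff[OF i]] ratio_diff_le s by auto
  qed
  also have "\<dots> = ratio_dev_int s"
    using has_integral_ratio_dev[OF s0(2)] integral_Icc_eq_Ioc by (metis integral_unique)
  finally have I: "\<bar>integral {0..s} U.ratio - integral {0..s} V.ratio\<bar> \<le> ratio_dev_int s" .
  have "\<bar>E1 a \<alpha>0 L N s - E1 a \<alpha>0 L' N' s\<bar>
      \<le> \<bar>\<alpha>0 * a * integral {0..s} U.ratio - \<alpha>0 * a * integral {0..s} V.ratio\<bar>"
    using abs_exp_minus_diff_le U.integral_ratio_nonneg[OF s0(1)] V.integral_ratio_nonneg[OF s0(1)]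
      U.\<alpha>0 U.a
    unfolding E1_def by simp
  also have "\<dots> = \<alpha>0 * a * \<bar>integral {0..s} U.ratio - integral {0..s} V.ratio\<bar>"
    using U.\<alpha>0 U.a by (simp add: abs_mult right_diff_distrib[symmetric])
  also have "\<dots> \<le> \<alpha>0 * a * ratio_dev_int s" using I U.\<alpha>0 U.a by (intro mult_left_mono) auto
  finally show ?thesis .
qed

lemma kernel_diff_le:
  assumes s: "s \<in> {0<..\<alpha>0}"
  shows "\<bar>U.kernel s - V.kernel s\<bar> \<le> kernel_dev s"
proof -
  have s0: "s > 0" using s by auto
  define P where "P = s powr \<mu>"
  have P: "P > 0" using s0 by (simp add: P_def)
  have l: "L s > 0" "L' s > 0" using U.L_pos[OF s] V.L_pos[OF s] .
  have il: "1 / L s \<le> P / L1m" "1 / L' s \<le> P / L1m"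
    using U.inverse_L_le[OF s] V.inverse_L_le[OF s] by (auto simp: P_def)
  define E where "E = E1 a \<alpha>0 L N s"
  define E' where "E' = E1 a \<alpha>0 L' N' s"
  have E': "0 < E'" "E' \<le> 1" using V.E1_le_1[of s] s unfolding E'_def by (auto simp: E1_def)
  have "\<bar>U.kernel s - V.kernel s\<bar> = \<bar>E / L s - E' / L' s\<bar> / s"
    using s0 l unfolding E_def E'_def by (simp add: field_simps)
  also have "\<dots> \<le> (\<bar>E - E'\<bar> * (1 / L s) + \<bar>E'\<bar> * \<bar>L s - L' s\<bar> * (1 / L s) * (1 / L' s)) / s"
    using s0 by (intro divide_right_mono abs_divide_diff_le l) auto
  also have "\<dots> \<le> ((\<alpha>0 * a * ratio_dev_int s) * (P / L1m) + 1 * (L1b * d) * (P / L1m) * (P / L1m)) / s"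
    using E1_diff_le[OF s] L_diff[OF s] il l P E' U.L1m L1b d s0
    unfolding E_def[symmetric] E'_def[symmetric]
    by (intro divide_right_mono add_mono mult_mono) auto
  also have "\<dots> = kernel_dev s"
  proof -
    have pw1: "s powr (\<mu>+1) = P * s" "s powr (2*\<mu>-\<nu>+1) = s powr (2*\<mu>-\<nu>) * s"
      unfolding P_def using s0 by (simp_all add: powr_add)
    have pw2: "s powr (2*\<mu>-\<nu>) = P * P * s powr (-\<nu>)" "s powr (2*\<mu>) = P * P"
      "s powr (3*\<mu>-\<nu>) = P * P * P * s powr (-\<nu>)" "s powr (2*\<mu>-1) = P * P / s"
      unfolding P_def using s0 by (simp_all flip: powr_add add: powr_diff algebra_simps)
    define k1 where "k1 = \<mu>+1"
    define k2 where "k2 = 2*\<mu>-\<nu>+1"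
    have "k1 > 0" "k2 > 0" using U.\<mu> by (auto simp: k1_def k2_def)
    then show ?thesis
      unfolding kernel_dev_def ratio_dev_int_def pw1 pw2 unfolding k1_def[symmetric] k2_def[symmetric]
      using s0 U.L1m by (simp add: field_simps power2_eq_square)
  qed
  finally show ?thesis .
qed

lemma has_integral_kernel_dev: "t \<ge> 0 \<Longrightarrow> (kernel_dev has_integral kernel_dev_int t) {0..t}"
  unfolding kernel_dev_def[abs_def] kernel_dev_int_def using U.\<mu>
  by (intro has_integral_add has_integral_mult_right has_integral_powr_from_0) auto

lemma kernel_dev_int_eq: "kernel_dev_int \<alpha>0 = Fbar1 a \<mu> \<nu> L1m N1M L1b N1b \<alpha>0 * d"
proof -
  have "\<mu>+1 > 0" "2*\<mu>+1 > 0" "2*\<mu>-\<nu>+1 > 0" "3*\<mu>-\<nu>+1 > 0" "2*\<mu> > 0" using U.\<mu> by auto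
  then show ?thesis
    unfolding kernel_dev_int_def Fbar1_def using U.L1m by (simp add: field_simps power2_eq_square)
qed

lemma F1_diff_le:
  assumes t: "t \<in> {0..\<alpha>0}"
  shows "\<bar>F1 a \<alpha>0 L N t - F1 a \<alpha>0 L' N' t\<bar> \<le> Fbar1 a \<mu> \<nu> L1m N1M L1b N1b \<alpha>0 * d"
proof -
  have t0: "t \<ge> 0" using t by auto
  have i: "U.kernel integrable_on {0<..t}" "V.kernel integrable_on {0<..t}"
    using integrable_on_subinterval[OF U.integrable_kernel, of 0 t]
      integrable_on_subinterval[OF V.integrable_kernel, of 0 t] t integrable_on_Icc_iff_Ioc by auto
  have ic: "kernel_dev integrable_on {0<..t}"
    using has_integral_kernel_dev[OF t0] integrable_on_Icc_iff_Ioc by blast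
  have "\<bar>F1 a \<alpha>0 L N t - F1 a \<alpha>0 L' N' t\<bar> = \<bar>integral {0<..t} (\<lambda>s. U.kernel s - V.kernel s)\<bar>"
    unfolding F1_def integral_Icc_eq_Ioc by (simp add: integral_diff[OF i])
  also have "\<dots> \<le> integral {0<..t} kernel_dev"
    using integral_norm_bound_integral[OF integrable_diff[OF i] ic] kernel_diff_le t by auto
  also have "\<dots> \<le> integral {0..\<alpha>0} kernel_dev"
  proof -
    have "kernel_dev s \<ge> 0" if "s \<ge> 0" for s
      unfolding kernel_dev_def using that U.\<mu> U.a U.\<alpha>0 U.L1m U.N1M L1b N1b d by simp
    then show ?thesis unfolding integral_Icc_eq_Ioc[symmetric]
      using t has_integral_kernel_dev[OF t0] has_integral_kernel_dev[of \<alpha>0] U.\<alpha>0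
      by (intro integral_subset_le) auto
  qed
  also have "\<dots> = Fbar1 a \<mu> \<nu> L1m N1M L1b N1b \<alpha>0 * d"
    using has_integral_kernel_dev[of \<alpha>0] U.\<alpha>0 kernel_dev_int_eq by (simp add: integral_unique)
  finally show ?thesis .
qed

end

section \<open>The kernel on \<open>[\<alpha>0, \<infinity>)\<close>\<close>

locale outer_coeffs =
  fixes a \<alpha>0 \<beta> \<sigma> L2m L2M N2M :: real and L N :: "real \<Rightarrow> real"
  assumes a: "a > 0" and \<alpha>0: "\<alpha>0 > 0" and \<beta>\<sigma>: "\<sigma> > 0" "\<beta> > \<sigma> + 2"
    and L2m: "L2m > 0" and L2M: "L2M > 0" and N2M: "N2M > 0"
    and L_bounds: "\<And>s. s \<ge> \<alpha>0 \<Longrightarrow> L2m * s powr \<beta> \<le> L s \<and> L s \<le> L2M * s powr \<beta>"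
    and N_bounds: "\<And>s. s \<ge> \<alpha>0 \<Longrightarrow> 0 \<le> N s \<and> N s \<le> N2M * s powr \<sigma>"
    and continuous_L: "continuous_on {\<alpha>0..} L" and continuous_N: "continuous_on {\<alpha>0..} N"
begin

abbreviation ratio :: "real \<Rightarrow> real" where "ratio s \<equiv> N s / L s"

abbreviation kernel :: "real \<Rightarrow> real" where "kernel s \<equiv> E2 a \<alpha>0 L N s / (s * L s)"

definition ratio_int_bound :: real where
  "ratio_int_bound = N2M / L2m * (-(\<alpha>0 powr (\<sigma>-\<beta>+1)) / (\<sigma>-\<beta>+1))"

text \<open>This lower bound for \<open>F\<^sub>2(\<alpha>0, \<infinity>, f)\<close> is where the exponential factor of \<open>\<phi>hat\<close> comes from.\<close>

definition F2inf_lower_bound :: real where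
  "F2inf_lower_bound = exp (-(\<alpha>0 * a * ratio_int_bound)) / L2M * (-(\<alpha>0 powr (-\<beta>-1+1)) / (-\<beta>-1+1))"

lemma L_pos: "s \<ge> \<alpha>0 \<Longrightarrow> L s > 0"
  using L_bounds[of s] L2m \<alpha>0 by (smt (verit) mult_pos_pos powr_gt_zero)

lemma inverse_L_le: assumes "s \<ge> \<alpha>0" shows "1 / L s \<le> s powr (-\<beta>) / L2m"
proof -
  have "1 / L s \<le> 1 / (L2m * s powr \<beta>)"
    using L_bounds[OF assms] L2m assms \<alpha>0 L_pos[OF assms] by (intro divide_left_mono) auto
  then show ?thesis by (simp add: powr_minus divide_inverse mult.commute)
qed

lemma inverse_L_ge: assumes "s \<ge> \<alpha>0" shows "s powr (-\<beta>) / L2M \<le> 1 / L s"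
proof -
  have "1 / (L2M * s powr \<beta>) \<le> 1 / L s"
    using L_bounds[OF assms] L2M assms \<alpha>0 L_pos[OF assms] by (intro divide_left_mono) auto
  then show ?thesis by (simp add: powr_minus divide_inverse mult.commute)
qed

lemma ratio_bounds:
  assumes "s \<ge> \<alpha>0"
  shows "0 \<le> ratio s" "ratio s \<le> N2M / L2m * s powr (\<sigma> - \<beta>)"
proof -
  show "0 \<le> ratio s" using N_bounds[OF assms] L_pos[OF assms] by simp
  have "ratio s = N s * (1 / L s)" by simp
  also have "\<dots> \<le> (N2M * s powr \<sigma>) * (s powr (-\<beta>) / L2m)"
    using N_bounds[OF assms] inverse_L_le[OF assms] L_pos[OF assms] by (intro mult_mono) auto
  also have "\<dots> = N2M / L2m * s powr (\<sigma> - \<beta>)" by (simp add: powr_diff powr_minus field_simps)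
  finally show "ratio s \<le> N2M / L2m * s powr (\<sigma> - \<beta>)" .
qed

lemma continuous_on_ratio: "continuous_on {\<alpha>0..} ratio"
  using continuous_L continuous_N L_pos by (intro continuous_intros) (auto simp: less_le)

lemma has_integral_ratio_majorant:
  "((\<lambda>s. N2M / L2m * s powr (\<sigma> - \<beta>)) has_integral ratio_int_bound) {\<alpha>0..}"
  unfolding ratio_int_bound_def using \<beta>\<sigma> \<alpha>0
  by (intro has_integral_mult_right has_integral_powr_to_inf) auto

lemma integrable_ratio: "ratio integrable_on {\<alpha>0..}"
  by (rule integrable_on_atLeast_powr_dominated[OF continuous_on_ratio, of "N2M / L2m" "\<sigma> - \<beta>"],
      metis ratio_bounds abs_of_nonneg) (use \<beta>\<sigma> \<alpha>0 in auto)

lemma integral_ratio_bounds: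
  assumes "t \<ge> \<alpha>0"
  shows "0 \<le> integral {\<alpha>0..t} ratio" "integral {\<alpha>0..t} ratio \<le> ratio_int_bound"
proof -
  have i: "ratio integrable_on {\<alpha>0..t}" by (rule integrable_on_subinterval[OF integrable_ratio]) auto
  show "0 \<le> integral {\<alpha>0..t} ratio" by (rule integral_nonneg[OF i]) (use ratio_bounds in auto)
  have "integral {\<alpha>0..t} ratio \<le> integral {\<alpha>0..} ratio"
    by (rule integral_subset_le[OF _ i integrable_ratio]) (use ratio_bounds in auto)
  also have "\<dots> \<le> integral {\<alpha>0..} (\<lambda>s. N2M / L2m * s powr (\<sigma> - \<beta>))"
    by (rule integral_le[OF integrable_ratio]) (use has_integral_ratio_majorant ratio_bounds in auto)
  also have "\<dots> = ratio_int_bound" using has_integral_ratio_majorant by (rule integral_unique)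
  finally show "integral {\<alpha>0..t} ratio \<le> ratio_int_bound" .
qed

lemma continuous_on_E2: "continuous_on {\<alpha>0..} (E2 a \<alpha>0 L N)"
  unfolding E2_def by (intro continuous_intros continuous_on_integral_atLeast integrable_ratio)

lemma E2_le_1: "t \<ge> \<alpha>0 \<Longrightarrow> E2 a \<alpha>0 L N t \<le> 1"
  unfolding E2_def using integral_ratio_bounds[of t] a \<alpha>0 by simp

lemma E2_ge: "t \<ge> \<alpha>0 \<Longrightarrow> exp (-(\<alpha>0 * a * ratio_int_bound)) \<le> E2 a \<alpha>0 L N t"
  unfolding E2_def using integral_ratio_bounds[of t] a \<alpha>0 by (simp add: mult_left_mono)

lemma kernel_bounds:
  assumes "s \<ge> \<alpha>0"
  shows "0 \<le> kernel s" "kernel s \<le> 1 / L2m * s powr (-\<beta>-1)"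
proof -
  have s: "s > 0" using assms \<alpha>0 by auto
  show "0 \<le> kernel s" using L_pos[OF assms] s by (simp add: E2_def)
  have "kernel s = E2 a \<alpha>0 L N s * (1 / L s) / s" by simp
  also have "\<dots> \<le> 1 * (s powr (-\<beta>) / L2m) / s"
    using E2_le_1[OF assms] inverse_L_le[OF assms] L_pos[OF assms] s
    by (intro divide_right_mono mult_mono) (auto simp: E2_def)
  also have "\<dots> = 1 / L2m * s powr (-\<beta>-1)" using s by (simp add: powr_diff)
  finally show "kernel s \<le> 1 / L2m * s powr (-\<beta>-1)" .
qed

lemma kernel_ge:
  assumes "s \<ge> \<alpha>0"
  shows "exp (-(\<alpha>0 * a * ratio_int_bound)) / L2M * s powr (-\<beta>-1) \<le> kernel s"
proof -
  have s: "s > 0" using assms \<alpha>0 by auto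
  have "exp (-(\<alpha>0 * a * ratio_int_bound)) / L2M * s powr (-\<beta>-1)
      = exp (-(\<alpha>0 * a * ratio_int_bound)) * (s powr (-\<beta>) / L2M) / s"
    using s by (simp add: powr_diff)
  also have "\<dots> \<le> E2 a \<alpha>0 L N s * (1 / L s) / s"
    using E2_ge[OF assms] inverse_L_ge[OF assms] L_pos[OF assms] s L2M
    by (intro divide_right_mono mult_mono) (auto simp: E2_def)
  finally show ?thesis by (simp add: mult.commute)
qed

lemma continuous_on_kernel: "continuous_on {\<alpha>0..} kernel"
proof -
  have "\<forall>s\<in>{\<alpha>0..}. s * L s \<noteq> 0" using L_pos \<alpha>0 by fastforce
  then show ?thesis using continuous_on_E2 continuous_L by (intro continuous_intros) auto
qed

lemma integrable_kernel_atLeast: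
  assumes "t \<ge> \<alpha>0"
  shows "kernel integrable_on {t..}"
proof (rule integrable_on_atLeast_powr_dominated[OF continuous_on_subset[OF continuous_on_kernel],
      of t "1 / L2m" "-\<beta>-1"])
  fix x assume "x \<ge> t"
  then show "\<bar>kernel x\<bar> \<le> 1 / L2m * x powr (-\<beta>-1)"
    using kernel_bounds[of x] assms by (simp only: abs_of_nonneg)
qed (use assms \<beta>\<sigma> \<alpha>0 in auto)

lemma integrable_kernel: "kernel integrable_on {\<alpha>0..}"
  using integrable_kernel_atLeast by simp

lemma continuous_on_F2: "continuous_on {\<alpha>0..} (F2 a \<alpha>0 L N)"
  unfolding F2_def[abs_def] by (rule continuous_on_integral_atLeast[OF integrable_kernel])

lemma F2_bounds:
  assumes "t \<ge> \<alpha>0"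
  shows "0 \<le> F2 a \<alpha>0 L N t" "F2 a \<alpha>0 L N t \<le> F2inf a \<alpha>0 L N"
proof -
  have i: "kernel integrable_on {\<alpha>0..t}" by (rule integrable_on_subinterval[OF integrable_kernel]) auto
  show "0 \<le> F2 a \<alpha>0 L N t" unfolding F2_def by (rule integral_nonneg[OF i]) (use kernel_bounds in auto)
  show "F2 a \<alpha>0 L N t \<le> F2inf a \<alpha>0 L N" unfolding F2_def F2inf_def
    by (rule integral_subset_le[OF _ i integrable_kernel]) (use kernel_bounds in auto)
qed

lemma F2inf_ge: "F2inf_lower_bound \<le> F2inf a \<alpha>0 L N"
proof -
  have "((\<lambda>s. exp (-(\<alpha>0 * a * ratio_int_bound)) / L2M * s powr (-\<beta>-1))
      has_integral F2inf_lower_bound) {\<alpha>0..}"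
    unfolding F2inf_lower_bound_def using \<beta>\<sigma> \<alpha>0
    by (intro has_integral_mult_right has_integral_powr_to_inf) auto
  then show ?thesis unfolding F2inf_def
    by (rule has_integral_le[OF _ integrable_integral[OF integrable_kernel]]) (use kernel_ge in auto)
qed

lemma F2inf_lower_bound_pos: "F2inf_lower_bound > 0"
  unfolding F2inf_lower_bound_def using \<beta>\<sigma> \<alpha>0 L2M by (auto intro!: mult_pos_pos divide_pos_pos)

lemma F2_tendsto_F2inf: "(F2 a \<alpha>0 L N \<longlongrightarrow> F2inf a \<alpha>0 L N) at_top"
proof (rule LIM_zero_cancel, rule Lim_null_comparison)
  let ?tail = "\<lambda>x. 1 / L2m * (-(x powr (-\<beta>-1+1)) / (-\<beta>-1+1))"
  show "\<forall>\<^sub>F x in at_top. norm (F2 a \<alpha>0 L N x - F2inf a \<alpha>0 L N) \<le> ?tail x"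
    using eventually_ge_at_top[of \<alpha>0]
  proof eventually_elim
    case (elim x)
    have "F2inf a \<alpha>0 L N = F2 a \<alpha>0 L N x + integral {x..} kernel"
    proof -
      have "{\<alpha>0..} = {\<alpha>0..x} \<union> {x..}" using elim by auto
      moreover have "integral ({\<alpha>0..x} \<union> {x..}) kernel = integral {\<alpha>0..x} kernel + integral {x..} kernel"
        by (rule integral_Un[OF integrable_on_subinterval[OF integrable_kernel]
              integrable_kernel_atLeast[OF elim]])
           (use elim in \<open>auto intro: negligible_subset[of "{x}"]\<close>)
      ultimately show ?thesis unfolding F2inf_def F2_def by simp
    qed
    moreover have "((\<lambda>s. 1 / L2m * s powr (-\<beta>-1)) has_integral ?tail x) {x..}"
      using \<beta>\<sigma> elim \<alpha>0 by (intro has_integral_mult_right has_integral_powr_to_inf) auto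
    then have "integral {x..} kernel \<le> ?tail x"
      by (rule has_integral_le[OF integrable_integral[OF integrable_kernel_atLeast[OF elim]]])
         (use kernel_bounds elim in auto)
    moreover have "0 \<le> integral {x..} kernel"
      by (rule integral_nonneg[OF integrable_kernel_atLeast[OF elim]]) (use kernel_bounds elim in auto)
    ultimately show ?case by simp
  qed
  have "((\<lambda>x. x powr (-\<beta>-1+1)) \<longlongrightarrow> 0) at_top"
    using \<beta>\<sigma> by (intro tendsto_neg_powr filterlim_ident) auto
  then have "(?tail \<longlongrightarrow> 1 / L2m * (-0 / (-\<beta>-1+1))) at_top"
    using \<beta>\<sigma> by (intro tendsto_intros) auto
  then show "(?tail \<longlongrightarrow> 0) at_top" by simp
qed

lemma inM_normalized_F2: "inM \<alpha>0 (\<lambda>\<xi>. - F2 a \<alpha>0 L N \<xi> / F2inf a \<alpha>0 L N)"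
  unfolding inM_def
proof (intro conjI)
  have pos: "F2inf a \<alpha>0 L N > 0" using F2inf_ge F2inf_lower_bound_pos by linarith
  show "continuous_on {\<alpha>0..} (\<lambda>\<xi>. - F2 a \<alpha>0 L N \<xi> / F2inf a \<alpha>0 L N)"
    using pos by (intro continuous_intros continuous_on_F2) auto
  show "bounded ((\<lambda>\<xi>. - F2 a \<alpha>0 L N \<xi> / F2inf a \<alpha>0 L N) ` {\<alpha>0..})"
    unfolding bounded_iff using F2_bounds pos by (intro exI[of _ 1]) (auto simp: divide_le_eq)
  show "- F2 a \<alpha>0 L N \<alpha>0 / F2inf a \<alpha>0 L N = 0" by (simp add: F2_def)
  have "((\<lambda>\<xi>. - F2 a \<alpha>0 L N \<xi> / F2inf a \<alpha>0 L N) \<longlongrightarrow> - F2inf a \<alpha>0 L N / F2inf a \<alpha>0 L N) at_top"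
    using pos by (intro tendsto_intros F2_tendsto_F2inf) simp
  then show "((\<lambda>\<xi>. - F2 a \<alpha>0 L N \<xi> / F2inf a \<alpha>0 L N) \<longlongrightarrow> -1) at_top" using pos by simp
qed

end

locale outer_coeffs_pair =
  U: outer_coeffs a \<alpha>0 \<beta> \<sigma> L2m L2M N2M L N + V: outer_coeffs a \<alpha>0 \<beta> \<sigma> L2m L2M N2M L' N'
  for a \<alpha>0 \<beta> \<sigma> L2m L2M N2M and L N L' N' :: "real \<Rightarrow> real" +
  fixes L2b N2b d :: real
  assumes L2b: "L2b \<ge> 0" and N2b: "N2b \<ge> 0" and d: "d \<ge> 0"
    and L_diff: "\<And>s. s \<ge> \<alpha>0 \<Longrightarrow> \<bar>L s - L' s\<bar> \<le> L2b * d"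
    and N_diff: "\<And>s. s \<ge> \<alpha>0 \<Longrightarrow> \<bar>N s - N' s\<bar> \<le> N2b * d"
begin

definition ratio_dev :: "real \<Rightarrow> real" where
  "ratio_dev s = N2b*d/L2m * s powr (-\<beta>) + N2M*L2b*d/L2m^2 * s powr (\<sigma>-2*\<beta>)"

definition ratio_dev_int :: real where
  "ratio_dev_int = N2b*d/L2m * (-(\<alpha>0 powr (-\<beta>+1))/(-\<beta>+1))
     + N2M*L2b*d/L2m^2 * (-(\<alpha>0 powr (\<sigma>-2*\<beta>+1))/(\<sigma>-2*\<beta>+1))"

definition kernel_dev :: "real \<Rightarrow> real" where
  "kernel_dev s = \<alpha>0*a*ratio_dev_int/L2m * s powr (-\<beta>-1) + L2b*d/L2m^2 * s powr (-2*\<beta>-1)"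

definition kernel_dev_int :: real where
  "kernel_dev_int = \<alpha>0*a*ratio_dev_int/L2m * (-(\<alpha>0 powr (-\<beta>-1+1))/(-\<beta>-1+1))
     + L2b*d/L2m^2 * (-(\<alpha>0 powr (-2*\<beta>-1+1))/(-2*\<beta>-1+1))"

lemma has_integral_ratio_dev: "(ratio_dev has_integral ratio_dev_int) {\<alpha>0..}"
  unfolding ratio_dev_def[abs_def] ratio_dev_int_def using U.\<beta>\<sigma> U.\<alpha>0
  by (intro has_integral_add has_integral_mult_right has_integral_powr_to_inf) auto

lemma ratio_dev_nonneg: "s \<ge> \<alpha>0 \<Longrightarrow> ratio_dev s \<ge> 0"
  unfolding ratio_dev_def using U.\<alpha>0 U.L2m U.N2M L2b N2b d by simp

lemma ratio_dev_int_nonneg: "ratio_dev_int \<ge> 0"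
  using has_integral_ratio_dev ratio_dev_nonneg by (metis atLeast_iff has_integral_nonneg)

lemma has_integral_kernel_dev: "(kernel_dev has_integral kernel_dev_int) {\<alpha>0..}"
  unfolding kernel_dev_def[abs_def] kernel_dev_int_def using U.\<beta>\<sigma> U.\<alpha>0
  by (intro has_integral_add has_integral_mult_right has_integral_powr_to_inf) auto

lemma kernel_dev_nonneg: "s \<ge> \<alpha>0 \<Longrightarrow> kernel_dev s \<ge> 0"
  unfolding kernel_dev_def using U.\<alpha>0 U.a U.L2m ratio_dev_int_nonneg L2b d by simp

lemma ratio_diff_le:
  assumes s: "s \<ge> \<alpha>0"
  shows "\<bar>U.ratio s - V.ratio s\<bar> \<le> ratio_dev s"
proof -
  define P where "P = s powr (-\<beta>)"
  have P: "P > 0" using s U.\<alpha>0 by (simp add: P_def)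
  have l: "L s > 0" "L' s > 0" using U.L_pos[OF s] V.L_pos[OF s] .
  have il: "1 / L s \<le> P / L2m" "1 / L' s \<le> P / L2m"
    using U.inverse_L_le[OF s] V.inverse_L_le[OF s] by (auto simp: P_def)
  have n: "0 \<le> N' s" "N' s \<le> N2M * s powr \<sigma>" using V.N_bounds[OF s] by auto
  have "\<bar>U.ratio s - V.ratio s\<bar>
      \<le> \<bar>N s - N' s\<bar> * (1 / L s) + \<bar>N' s\<bar> * \<bar>L s - L' s\<bar> * (1 / L s) * (1 / L' s)"
    by (rule abs_divide_diff_le[OF l])
  also have "\<dots> \<le> (N2b * d) * (P / L2m) + (N2M * s powr \<sigma>) * (L2b * d) * (P / L2m) * (P / L2m)"
    using N_diff[OF s] L_diff[OF s] il n l P U.L2m L2b d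
    by (intro add_mono mult_mono) auto
  also have "\<dots> = ratio_dev s"
  proof -
    have "s powr (\<sigma>-2*\<beta>) = s powr \<sigma> * P * P" unfolding P_def by (simp add: powr_add[symmetric])
    then show ?thesis unfolding ratio_dev_def P_def[symmetric] by (simp add: power2_eq_square)
  qed
  finally show ?thesis .
qed

lemma E2_diff_le:
  assumes s: "s \<ge> \<alpha>0"
  shows "\<bar>E2 a \<alpha>0 L N s - E2 a \<alpha>0 L' N' s\<bar> \<le> \<alpha>0 * a * ratio_dev_int"
proof -
  have i: "U.ratio integrable_on {\<alpha>0..s}" "V.ratio integrable_on {\<alpha>0..s}"
    by (rule integrable_on_subinterval[OF U.integrable_ratio] integrable_on_subinterval[OF V.integrable_ratio],
        simp)+
  have ib: "ratio_dev integrable_on {\<alpha>0..s}"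
    by (rule integrable_on_subinterval[OF has_integral_integrable[OF has_integral_ratio_dev]]) auto
  have "\<bar>integral {\<alpha>0..s} U.ratio - integral {\<alpha>0..s} V.ratio\<bar>
      = \<bar>integral {\<alpha>0..s} (\<lambda>x. U.ratio x - V.ratio x)\<bar>"
    by (simp add: integral_diff[OF i])
  also have "\<dots> \<le> integral {\<alpha>0..s} ratio_dev"
    using integral_norm_bound_integral[OF integrable_diff[OF i] ib] ratio_diff_le by auto
  also have "\<dots> \<le> integral {\<alpha>0..} ratio_dev"
    by (rule integral_subset_le[OF _ ib has_integral_integrable[OF has_integral_ratio_dev]])
       (use ratio_dev_nonneg in auto)
  also have "\<dots> = ratio_dev_int" using has_integral_ratio_dev by (rule integral_unique)
  finally have I: "\<bar>integral {\<alpha>0..s} U.ratio - integral {\<alpha>0..s} V.ratio\<bar> \<le> ratio_dev_int" .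
  have "\<bar>E2 a \<alpha>0 L N s - E2 a \<alpha>0 L' N' s\<bar>
      \<le> \<bar>\<alpha>0 * a * integral {\<alpha>0..s} U.ratio - \<alpha>0 * a * integral {\<alpha>0..s} V.ratio\<bar>"
    using abs_exp_minus_diff_le U.integral_ratio_bounds(1)[OF s] V.integral_ratio_bounds(1)[OF s]
      U.\<alpha>0 U.a
    unfolding E2_def by simp
  also have "\<dots> = \<alpha>0 * a * \<bar>integral {\<alpha>0..s} U.ratio - integral {\<alpha>0..s} V.ratio\<bar>"
    using U.\<alpha>0 U.a by (simp add: abs_mult right_diff_distrib[symmetric])
  also have "\<dots> \<le> \<alpha>0 * a * ratio_dev_int" using I U.\<alpha>0 U.a by (intro mult_left_mono) auto
  finally show ?thesis .
qed

lemma kernel_diff_le: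
  assumes s: "s \<ge> \<alpha>0"
  shows "\<bar>U.kernel s - V.kernel s\<bar> \<le> kernel_dev s"
proof -
  have s0: "s > 0" using s U.\<alpha>0 by auto
  define P where "P = s powr (-\<beta>)"
  have P: "P > 0" using s0 by (simp add: P_def)
  have l: "L s > 0" "L' s > 0" using U.L_pos[OF s] V.L_pos[OF s] .
  have il: "1 / L s \<le> P / L2m" "1 / L' s \<le> P / L2m"
    using U.inverse_L_le[OF s] V.inverse_L_le[OF s] by (auto simp: P_def)
  define E where "E = E2 a \<alpha>0 L N s"
  define E' where "E' = E2 a \<alpha>0 L' N' s"
  have E': "0 < E'" "E' \<le> 1" using V.E2_le_1[OF s] unfolding E'_def by (auto simp: E2_def)
  have "\<bar>U.kernel s - V.kernel s\<bar> = \<bar>E / L s - E' / L' s\<bar> / s"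
    using s0 l unfolding E_def E'_def by (simp add: field_simps)
  also have "\<dots> \<le> (\<bar>E - E'\<bar> * (1 / L s) + \<bar>E'\<bar> * \<bar>L s - L' s\<bar> * (1 / L s) * (1 / L' s)) / s"
    using s0 by (intro divide_right_mono abs_divide_diff_le l) auto
  also have "\<dots> \<le> ((\<alpha>0 * a * ratio_dev_int) * (P / L2m) + 1 * (L2b * d) * (P / L2m) * (P / L2m)) / s"
    using E2_diff_le[OF s] L_diff[OF s] il l P E' U.L2m L2b d s0
    unfolding E_def[symmetric] E'_def[symmetric]
    by (intro divide_right_mono add_mono mult_mono) auto
  also have "\<dots> = kernel_dev s"
  proof -
    have "s powr (-\<beta>-1) = P / s" "s powr (-2*\<beta>-1) = P * P / s"
      unfolding P_def using s0 by (simp_all add: powr_diff flip: powr_add)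
    then show ?thesis unfolding kernel_dev_def using s0 U.L2m by (simp add: field_simps power2_eq_square)
  qed
  finally show ?thesis .
qed

lemma F2_diff_le:
  assumes t: "t \<ge> \<alpha>0"
  shows "\<bar>F2 a \<alpha>0 L N t - F2 a \<alpha>0 L' N' t\<bar> \<le> kernel_dev_int"
proof -
  have i: "U.kernel integrable_on {\<alpha>0..t}" "V.kernel integrable_on {\<alpha>0..t}"
    by (rule integrable_on_subinterval[OF U.integrable_kernel] integrable_on_subinterval[OF V.integrable_kernel],
        simp)+
  have ic: "kernel_dev integrable_on {\<alpha>0..t}"
    by (rule integrable_on_subinterval[OF has_integral_integrable[OF has_integral_kernel_dev]]) auto
  have "\<bar>F2 a \<alpha>0 L N t - F2 a \<alpha>0 L' N' t\<bar> = \<bar>integral {\<alpha>0..t} (\<lambda>s. U.kernel s - V.kernel s)\<bar>"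
    unfolding F2_def by (simp add: integral_diff[OF i])
  also have "\<dots> \<le> integral {\<alpha>0..t} kernel_dev"
    using integral_norm_bound_integral[OF integrable_diff[OF i] ic] kernel_diff_le by auto
  also have "\<dots> \<le> integral {\<alpha>0..} kernel_dev"
    by (rule integral_subset_le[OF _ ic has_integral_integrable[OF has_integral_kernel_dev]])
       (use kernel_dev_nonneg in auto)
  also have "\<dots> = kernel_dev_int" using has_integral_kernel_dev by (rule integral_unique)
  finally show ?thesis .
qed

lemma F2inf_diff_le: "\<bar>F2inf a \<alpha>0 L N - F2inf a \<alpha>0 L' N'\<bar> \<le> kernel_dev_int"
proof -
  have "\<bar>F2inf a \<alpha>0 L N - F2inf a \<alpha>0 L' N'\<bar> = \<bar>integral {\<alpha>0..} (\<lambda>s. U.kernel s - V.kernel s)\<bar>"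
    unfolding F2inf_def by (simp add: integral_diff[OF U.integrable_kernel V.integrable_kernel])
  also have "\<dots> \<le> integral {\<alpha>0..} kernel_dev"
    using integral_norm_bound_integral[OF integrable_diff[OF U.integrable_kernel V.integrable_kernel]
        has_integral_integrable[OF has_integral_kernel_dev]] kernel_diff_le
    by auto
  also have "\<dots> = kernel_dev_int" using has_integral_kernel_dev by (rule integral_unique)
  finally show ?thesis .
qed

lemma normalized_F2_diff_le:
  assumes t: "t \<ge> \<alpha>0"
  shows "\<bar>- F2 a \<alpha>0 L N t / F2inf a \<alpha>0 L N - (- F2 a \<alpha>0 L' N' t / F2inf a \<alpha>0 L' N')\<bar>
    \<le> 2 * kernel_dev_int / U.F2inf_lower_bound"
proof -
  have pos: "F2inf a \<alpha>0 L N > 0" "F2inf a \<alpha>0 L' N' > 0"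
    using U.F2inf_ge V.F2inf_ge U.F2inf_lower_bound_pos V.F2inf_lower_bound_pos by linarith+
  have "\<bar>- F2 a \<alpha>0 L N t / F2inf a \<alpha>0 L N - (- F2 a \<alpha>0 L' N' t / F2inf a \<alpha>0 L' N')\<bar>
      = \<bar>F2 a \<alpha>0 L N t / F2inf a \<alpha>0 L N - F2 a \<alpha>0 L' N' t / F2inf a \<alpha>0 L' N'\<bar>"
    by simp
  also have "\<dots> \<le> (\<bar>F2 a \<alpha>0 L N t - F2 a \<alpha>0 L' N' t\<bar> + \<bar>F2inf a \<alpha>0 L N - F2inf a \<alpha>0 L' N'\<bar>)
      / F2inf a \<alpha>0 L N"
    by (rule abs_divide_diff_le_of_le) (use V.F2_bounds[OF t] pos in auto)
  also have "\<dots> \<le> (kernel_dev_int + kernel_dev_int) / U.F2inf_lower_bound"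
    using F2_diff_le[OF t] F2inf_diff_le U.F2inf_ge U.F2inf_lower_bound_pos
    by (intro frac_le add_mono) (auto intro: order_trans[OF abs_ge_zero])
  finally show ?thesis by simp
qed

lemma kernel_dev_int_eq: "kernel_dev_int = Fbar2 a \<beta> \<sigma> L2m N2M L2b N2b \<alpha>0 * d"
proof -
  define p where "p = \<alpha>0 powr \<beta>"
  define q where "q = \<alpha>0 powr \<sigma>"
  define k1 where "k1 = \<beta> - 1"
  define k2 where "k2 = 2*\<beta> - \<sigma> - 1"
  have pos: "\<alpha>0 > 0" "p > 0" "k1 > 0" "k2 > 0" "\<beta> > 0" "L2m > 0"
    using U.\<alpha>0 U.\<beta>\<sigma> U.L2m by (auto simp: p_def k1_def k2_def)
  have "\<alpha>0 powr (-\<beta>+1) = \<alpha>0 powr (1 - \<beta>)" "\<alpha>0 powr (\<sigma>-2*\<beta>+1) = \<alpha>0 powr ((1 + \<sigma>) - (\<beta> + \<beta>))"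
    "\<alpha>0 powr (-\<beta>-1+1) = \<alpha>0 powr (0 - \<beta>)" "\<alpha>0 powr (-2*\<beta>-1+1) = \<alpha>0 powr (0 - (\<beta> + \<beta>))"
    "\<alpha>0 powr (2*\<beta>-\<sigma>-1) = \<alpha>0 powr ((\<beta> + \<beta>) - (1 + \<sigma>))"
    "\<alpha>0 powr (2*\<beta>) = \<alpha>0 powr (\<beta> + \<beta>)"
    by (simp_all add: algebra_simps)
  then have pw: "\<alpha>0 powr (-\<beta>+1) = \<alpha>0 / p" "\<alpha>0 powr (\<sigma>-2*\<beta>+1) = \<alpha>0 * q / (p * p)"
    "\<alpha>0 powr (-\<beta>-1+1) = 1 / p" "\<alpha>0 powr (-2*\<beta>-1+1) = 1 / (p * p)"
    "\<alpha>0 powr (\<beta>-1) = p / \<alpha>0" "\<alpha>0 powr (2*\<beta>-\<sigma>-1) = p * p / (\<alpha>0 * q)"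
    "\<alpha>0 powr (2*\<beta>) = p * p"
    using pos by (simp_all only: powr_diff powr_add p_def q_def powr_one) simp_all
  have den: "-\<beta>+1 = -k1" "\<sigma>-2*\<beta>+1 = -k2" "-\<beta>-1+1 = -\<beta>" "-2*\<beta>-1+1 = -(2*\<beta>)"
    "2*\<beta>-\<sigma>-1 = k2" "\<beta>-1 = k1"
    by (simp_all add: k1_def k2_def)
  show ?thesis
    unfolding kernel_dev_int_def ratio_dev_int_def Fbar2_def pw unfolding den p_def[symmetric]
    using pos by (simp add: field_simps power2_eq_square)
qed

lemma normalized_F2_diff_bound_eq:
  "2 * kernel_dev_int / U.F2inf_lower_bound = phihat a \<beta> \<sigma> L2m L2M N2M L2b N2b \<alpha>0 * d"
proof -
  define p where "p = \<alpha>0 powr \<beta>"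
  define k where "k = \<beta> - \<sigma> - 1"
  define r where "r = \<alpha>0 powr (\<sigma>-\<beta>+1)"
  define c where "c = a * N2M / (L2m * k) * (1 / \<alpha>0 powr (\<beta>-\<sigma>-2))"
  have pos: "\<alpha>0 > 0" "p > 0" "k > 0" "\<beta> > 0" "L2m > 0" "L2M > 0"
    using U.\<alpha>0 U.\<beta>\<sigma> U.L2m U.L2M by (auto simp: p_def k_def)
  have "1 / \<alpha>0 powr (\<beta>-\<sigma>-2) = \<alpha>0 powr (0 - (\<beta>-\<sigma>-2))"
    using pos by (simp add: powr_diff)
  also have "\<dots> = \<alpha>0 powr (\<sigma>-\<beta>+1) * \<alpha>0 powr 1"
    by (subst powr_add[symmetric]) (simp add: algebra_simps)
  also have "\<dots> = \<alpha>0 * r" using pos by (simp add: r_def)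
  finally have w: "1 / \<alpha>0 powr (\<beta>-\<sigma>-2) = \<alpha>0 * r" .
  have den: "\<sigma>-\<beta>+1 = -k" by (simp add: k_def)
  have "\<alpha>0 * a * U.ratio_int_bound = c"
    unfolding U.ratio_int_bound_def c_def r_def[symmetric] w unfolding den
    using pos by (simp add: field_simps)
  moreover have "\<alpha>0 powr (-\<beta>-1+1) = 1 / p" by (simp add: p_def powr_minus_divide)
  ultimately have lower: "U.F2inf_lower_bound = exp (-c) / L2M * (1 / (p * \<beta>))"
    unfolding U.F2inf_lower_bound_def by simp
  have phihat: "phihat a \<beta> \<sigma> L2m L2M N2M L2b N2b \<alpha>0
      = 2 * L2M * \<beta> * p * Fbar2 a \<beta> \<sigma> L2m N2M L2b N2b \<alpha>0 * exp c"
    unfolding phihat_def c_def k_def p_def ..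
  show ?thesis
    unfolding kernel_dev_int_eq lower phihat using pos by (simp add: exp_minus field_simps)
qed

end

section \<open>Monotonicity of \<open>\<phi>\<close> and \<open>\<phi>hat\<close>\<close>

lemma tendsto_powr_at_right_0: "p > 0 \<Longrightarrow> ((\<lambda>x::real. x powr p) \<longlongrightarrow> 0) (at_right 0)"
  by (rule tendsto_zero_powrI[OF tendsto_ident_at tendsto_const
        eventually_mono[OF eventually_at_right_less]]) auto

lemma filterlim_powr_at_top: "p > 0 \<Longrightarrow> filterlim (\<lambda>x::real. x powr p) at_top at_top"
proof -
  assume "p > 0"
  then have "filterlim (\<lambda>x::real. inverse (x powr (-p))) at_top at_top"
    by (intro filterlim_inverse_at_top[OF tendsto_neg_powr[OF _ filterlim_ident]
          eventually_mono[OF eventually_gt_at_top[of 0]]]) auto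
  moreover have "eventually (\<lambda>x::real. inverse (x powr (-p)) = x powr p) at_top"
    by (rule eventually_mono[OF eventually_gt_at_top[of 0]]) (simp add: powr_minus)
  ultimately show ?thesis using filterlim_cong by fastforce
qed

lemma filterlim_powr_at_right_0: "p < 0 \<Longrightarrow> filterlim (\<lambda>x::real. x powr p) at_top (at_right 0)"
proof -
  assume "p < 0"
  then have "filterlim (\<lambda>x::real. inverse (x powr (-p))) at_top (at_right 0)"
    by (intro filterlim_inverse_at_top[OF tendsto_powr_at_right_0
          eventually_mono[OF eventually_at_right_less]]) auto
  moreover have "eventually (\<lambda>x::real. inverse (x powr (-p)) = x powr p) (at_right 0)"
    by (rule eventually_mono[OF eventually_at_right_less]) (simp add: powr_minus)
  ultimately show ?thesis using filterlim_cong by fastforce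
qed

text \<open>Up to positive factors, \<open>\<phi>\<close> is such a sum with positive exponents and \<open>\<phi>hat\<close> is such a sum
  with negative exponents times a decreasing exponential.\<close>

locale power_sum =
  fixes A1 A2 A3 p1 p2 p3 :: real
  assumes coeffs_nonneg: "A1 \<ge> 0" "A2 \<ge> 0" "A3 \<ge> 0" and coeffs_nonzero: "A1 + A2 + A3 > 0"
begin

definition psum :: "real \<Rightarrow> real" where
  "psum z = A1 * z powr p1 + A2 * z powr p2 + A3 * z powr p3"

lemma psum_ge: "z > 0 \<Longrightarrow> psum z \<ge> A1 * z powr p1 \<and> psum z \<ge> A2 * z powr p2 \<and> psum z \<ge> A3 * z powr p3"
  unfolding psum_def using coeffs_nonneg by (simp add: add_increasing add_increasing2)

lemma psum_pos: "z > 0 \<Longrightarrow> psum z > 0"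
  unfolding psum_def using coeffs_nonneg coeffs_nonzero
  by (smt (verit) mult_nonneg_nonneg mult_pos_pos powr_gt_zero)

lemma filterlim_psum_at_top:
  assumes "\<And>A p. A > 0 \<Longrightarrow> (A, p) \<in> {(A1, p1), (A2, p2), (A3, p3)} \<Longrightarrow> filterlim (\<lambda>z. A * z powr p) at_top F"
    and "eventually (\<lambda>z. z > 0) F"
  shows "filterlim psum at_top F"
proof -
  have "A1 > 0 \<or> A2 > 0 \<or> A3 > 0" using coeffs_nonneg coeffs_nonzero by linarith
  then obtain A p where "A > 0" "(A, p) \<in> {(A1, p1), (A2, p2), (A3, p3)}" by blast
  moreover have "eventually (\<lambda>z. A * z powr p \<le> psum z) F"
    using assms(2) by eventually_elim (use psum_ge \<open>(A, p) \<in> _\<close> in auto)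
  ultimately show ?thesis using assms(1) filterlim_at_top_mono by blast
qed

end

locale power_sum_pos_exponents = power_sum +
  assumes exps_pos: "p1 > 0" "p2 > 0" "p3 > 0"
begin

lemma psum_strict_mono: assumes "0 < x" "x < y" shows "psum x < psum y"
proof -
  have "A * x powr p \<le> A * y powr p" "A > 0 \<Longrightarrow> A * x powr p < A * y powr p"
    if "A \<ge> 0" "p > 0" for A p
    using powr_less_mono2[OF _ _ assms(2), of p] that assms by (auto intro: mult_left_mono)
  then show ?thesis
    unfolding psum_def using exps_pos coeffs_nonneg coeffs_nonzero by (smt (verit))
qed

lemma psum_tendsto_0: "(psum \<longlongrightarrow> 0) (at_right 0)"
proof -
  have "((\<lambda>z. A1 * z powr p1 + A2 * z powr p2 + A3 * z powr p3) \<longlongrightarrow> A1 * 0 + A2 * 0 + A3 * 0) (at_right 0)"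
    by (intro tendsto_add tendsto_mult tendsto_const tendsto_powr_at_right_0 exps_pos)
  then show ?thesis unfolding psum_def[abs_def] by simp
qed

lemma psum_at_top: "filterlim psum at_top at_top"
  using exps_pos filterlim_powr_at_top
  by (intro filterlim_psum_at_top eventually_gt_at_top filterlim_tendsto_pos_mult_at_top[OF tendsto_const])
     auto

end

locale power_sum_neg_exponents = power_sum +
  assumes exps_neg: "p1 < 0" "p2 < 0" "p3 < 0"
begin

lemma psum_strict_antimono: assumes "0 < x" "x < y" shows "psum y < psum x"
proof -
  have "A * y powr p \<le> A * x powr p" "A > 0 \<Longrightarrow> A * y powr p < A * x powr p"
    if "A \<ge> 0" "p < 0" for A p
    using powr_less_mono2_neg[OF _ _ assms(2), of p] that assms by (auto intro: mult_left_mono)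
  then show ?thesis
    unfolding psum_def using exps_neg coeffs_nonneg coeffs_nonzero by (smt (verit))
qed

lemma psum_tendsto_0: "(psum \<longlongrightarrow> 0) at_top"
proof -
  have "((\<lambda>z. A1 * z powr p1 + A2 * z powr p2 + A3 * z powr p3) \<longlongrightarrow> A1 * 0 + A2 * 0 + A3 * 0) at_top"
    by (intro tendsto_add tendsto_mult tendsto_const tendsto_neg_powr filterlim_ident exps_neg)
  then show ?thesis unfolding psum_def[abs_def] by simp
qed

lemma psum_at_right_0: "filterlim psum at_top (at_right 0)"
  using exps_neg filterlim_powr_at_right_0
  by (intro filterlim_psum_at_top eventually_at_right_less filterlim_tendsto_pos_mult_at_top[OF tendsto_const])
     auto

end

lemma Fbar1_as_power_sum:
  assumes "z > 0"
  shows "Fbar1 a \<mu> \<nu> L1m N1M L1b N1b z =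
    (a/L1m^2*(N1b/((\<mu>+1)*(2*\<mu>+1)))) * z powr (2*\<mu>+1+1)
  + (a/L1m^2*(L1b*N1M/L1m/((2*\<mu>-\<nu>+1)*(3*\<mu>-\<nu>+1)))) * z powr (3*\<mu>-\<nu>+1+1)
  + (L1b/L1m^2/(2*\<mu>)) * z powr (2*\<mu>)"
proof -
  have e: "z powr (x+1) = z * z powr x" for x using assms by (simp add: powr_add)
  have ring: "z*a/L^2 * (N*X/K1 + B*M/L*Y/K2) + B/L^2*Z/K3
      = a/L^2*(N/K1)*(z*X) + a/L^2*(B*M/L/K2)*(z*Y) + B/L^2/K3*Z" for L N X B M Y K1 K2 K3 Z :: real
    by (simp add: divide_inverse algebra_simps)
  show ?thesis unfolding Fbar1_def e ring ..
qed

lemma phi_properties: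
  fixes D a \<mu> \<nu> L1m N1M L1b N1b :: real
  assumes "a > 0" "D > 0" "\<mu> > 1" "\<nu> > 0" "\<nu> < \<mu>" "L1m > 0" "N1M > 0" "L1b \<ge> 0" "N1b \<ge> 0"
    "L1b + N1b > 0"
  defines "\<phi> \<equiv> phi D a \<mu> \<nu> L1m N1M L1b N1b"
  shows "(\<forall>z>0. \<phi> z > 0) \<and> (\<forall>x>0. \<forall>y>x. \<phi> x < \<phi> y) \<and> (\<phi> \<longlongrightarrow> 0) (at_right 0)
    \<and> filterlim \<phi> at_top at_top"
proof -
  define A1 where "A1 = a/L1m^2*(N1b/((\<mu>+1)*(2*\<mu>+1)))"
  define A2 where "A2 = a/L1m^2*(L1b*N1M/L1m/((2*\<mu>-\<nu>+1)*(3*\<mu>-\<nu>+1)))"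
  define A3 where "A3 = L1b/L1m^2/(2*\<mu>)"
  have "A1 \<ge> 0" "A2 \<ge> 0" "A3 \<ge> 0" unfolding A1_def A2_def A3_def using assms by auto
  moreover have "A1 > 0 \<or> A3 > 0"
    unfolding A1_def A3_def using assms by (cases "L1b > 0") auto
  ultimately interpret P: power_sum_pos_exponents A1 A2 A3 "2*\<mu>+1+1" "3*\<mu>-\<nu>+1+1" "2*\<mu>"
    by unfold_locales (use assms in auto)
  have eq: "\<phi> z = (2*D) * P.psum z" if "z > 0" for z
    unfolding \<phi>_def phi_def P.psum_def unfolding A1_def A2_def A3_def Fbar1_as_power_sum[OF that]
    by simp
  have "eventually (\<lambda>z. (2*D) * P.psum z = \<phi> z) (at_right 0)"
    by (rule eventually_mono[OF eventually_at_right_less]) (simp add: eq)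
  moreover have "((\<lambda>z. (2*D) * P.psum z) \<longlongrightarrow> (2*D) * 0) (at_right 0)"
    by (intro tendsto_mult tendsto_const P.psum_tendsto_0)
  moreover have "eventually (\<lambda>z. (2*D) * P.psum z = \<phi> z) at_top"
    by (rule eventually_mono[OF eventually_gt_at_top[of 0]]) (simp add: eq)
  moreover have "filterlim (\<lambda>z. (2*D) * P.psum z) at_top at_top"
    using assms by (intro filterlim_tendsto_pos_mult_at_top[OF tendsto_const _ P.psum_at_top]) simp
  ultimately show ?thesis
    using eq P.psum_pos P.psum_strict_mono \<open>D > 0\<close>
    by (auto simp: tendsto_cong filterlim_cong)
qed

lemma phi_Dstar_less_1:
  assumes "Q0 > 0" "lam0 > 0" "\<theta>m > 0" "Fbar1 a \<mu> \<nu> L1m N1M L1b N1b z > 0"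
    and "Q0 < 2 * pi * lam0 * \<theta>m / Fbar1 a \<mu> \<nu> L1m N1M L1b N1b z"
  shows "phi (Dstar Q0 lam0 \<theta>m) a \<mu> \<nu> L1m N1M L1b N1b z < 1"
proof -
  have "Q0 * Fbar1 a \<mu> \<nu> L1m N1M L1b N1b z < 2 * pi * lam0 * \<theta>m"
    using assms(4,5) by (simp add: less_divide_eq)
  then show ?thesis unfolding phi_def Dstar_def using assms(1-3) by (simp add: field_simps)
qed

lemma phihat_as_power_sum:
  assumes z: "z > 0" and "\<beta> > 0" "L2m > 0"
  shows "phihat a \<beta> \<sigma> L2m L2M N2M L2b N2b z =
    (2*L2M*\<beta>) * ((a/(\<beta>*L2m^2)*(N2b/(\<beta>-1))) * z powr (2-\<beta>)
       + (a/(\<beta>*L2m^2)*(L2b * N2M / (L2m * (2*\<beta>-\<sigma>-1)))) * z powr (\<sigma>+2-2*\<beta>)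
       + (L2b/(2*\<beta>*L2m^2)) * z powr (-\<beta>))
    * exp (a * N2M / (L2m * (\<beta>-\<sigma>-1)) * z powr (\<sigma>+2-\<beta>))"
proof -
  define p where "p = z powr \<beta>"
  define q where "q = z powr \<sigma>"
  have p: "p > 0" using z by (simp add: p_def)
  have pw: "z powr (x + y) = z powr x * z powr y" "z powr (x - y) = z powr x / z powr y" for x y
    by (simp_all add: powr_add powr_diff)
  have P2: "z powr (2*\<beta>) = p*p" unfolding p_def by (simp add: powr_add[symmetric])
  have rw: "1 / z powr (\<beta>-1) = z/p" "1 / z powr (2*\<beta>-\<sigma>-1) = z*q/(p*p)"
    "z powr (2-\<beta>) = z*z/p" "z powr (\<sigma>+2-2*\<beta>) = z*z*q/(p*p)"
    "1 / z powr \<beta> = 1/p" "1 / z powr (2*\<beta>) = 1/(p*p)" "z powr (-\<beta>) = 1/p"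
    "1 / z powr (\<beta>-\<sigma>-2) = z powr (\<sigma>+2-\<beta>)"
    unfolding pw P2 p_def q_def using z p
    by (simp_all add: power2_eq_square powr_minus_divide)
  have ring: "2*L2M*\<beta>*p*(z*a/(\<beta>*L^2)*(N/b1*(z/p) + K*(z*q/(p*p)))*(1/p) + B/(2*\<beta>*L^2)*(1/(p*p))) * E
      = (2*L2M*\<beta>) * ((a/(\<beta>*L^2)*(N/b1)) * (z*z/p) + (a/(\<beta>*L^2)*K) * (z*z*q/(p*p))
        + (B/(2*\<beta>*L^2)) * (1/p)) * E"
    if "L > 0" for L N b1 K B E :: real
    using p that \<open>\<beta> > 0\<close> by (simp add: field_simps power2_eq_square)
  show ?thesis unfolding phihat_def Fbar2_def rw p_def[symmetric]
    by (rule ring) (rule \<open>L2m > 0\<close>)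
qed

lemma phihat_properties:
  fixes a \<beta> \<sigma> L2m L2M N2M L2b N2b :: real
  assumes "a > 0" "\<sigma> > 0" "\<beta> > \<sigma> + 2" "L2m > 0" "L2M > 0" "N2M > 0" "L2b \<ge> 0" "N2b \<ge> 0"
    "L2b + N2b > 0"
  defines "\<phi>h \<equiv> phihat a \<beta> \<sigma> L2m L2M N2M L2b N2b"
  shows "(\<forall>z>0. \<phi>h z > 0) \<and> (\<forall>x>0. \<forall>y>x. \<phi>h y < \<phi>h x) \<and> filterlim \<phi>h at_top (at_right 0)
    \<and> (\<phi>h \<longlongrightarrow> 0) at_top"
proof -
  define B1 where "B1 = a/(\<beta>*L2m^2)*(N2b/(\<beta>-1))"
  define B2 where "B2 = a/(\<beta>*L2m^2)*(L2b * N2M / (L2m * (2*\<beta>-\<sigma>-1)))"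
  define B3 where "B3 = L2b/(2*\<beta>*L2m^2)"
  define C where "C = a * N2M / (L2m * (\<beta>-\<sigma>-1))"
  define K where "K = 2*L2M*\<beta>"
  define X where "X z = exp (C * z powr (\<sigma>+2-\<beta>))" for z :: real
  have "B1 \<ge> 0" "B2 \<ge> 0" "B3 \<ge> 0" unfolding B1_def B2_def B3_def using assms by auto
  moreover have "B1 > 0 \<or> B3 > 0"
    unfolding B1_def B3_def using assms by (cases "L2b > 0") auto
  ultimately interpret P: power_sum_neg_exponents B1 B2 B3 "2-\<beta>" "\<sigma>+2-2*\<beta>" "-\<beta>"
    by unfold_locales (use assms in auto)
  have C: "C > 0" and K: "K > 0" unfolding C_def K_def using assms by auto
  have eq: "\<phi>h z = K * P.psum z * X z" if "z > 0" for z
    unfolding \<phi>h_def P.psum_def X_def unfolding B1_def B2_def B3_def C_def K_def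
    by (rule phihat_as_power_sum[OF that]) (use assms in auto)
  have X_ge_1: "X z \<ge> 1" if "z > 0" for z unfolding X_def using C that by auto
  have X_antimono: "X y \<le> X x" if "0 < x" "x \<le> y" for x y
    unfolding X_def using C assms that by (auto intro!: mult_left_mono powr_mono2')
  show ?thesis
  proof (intro conjI allI impI)
    show "\<phi>h z > 0" if "z > 0" for z using eq[OF that] P.psum_pos[OF that] K X_ge_1[OF that] by simp
    show "\<phi>h y < \<phi>h x" if "x > 0" "y > x" for x y
    proof -
      have y: "y > 0" using that by auto
      have "K * P.psum y * X y \<le> K * P.psum y * X x"
        using X_antimono[of x y] that K P.psum_pos[OF y] by (intro mult_left_mono) auto
      also have "\<dots> < K * P.psum x * X x"
        using P.psum_strict_antimono[OF that] K X_ge_1[OF that(1)] by (intro mult_strict_right_mono) auto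
      finally show ?thesis using eq[OF that(1)] eq[OF y] by simp
    qed
    have "filterlim (\<lambda>z. K * P.psum z) at_top (at_right 0)"
      by (rule filterlim_tendsto_pos_mult_at_top[OF tendsto_const K P.psum_at_right_0])
    moreover have "eventually (\<lambda>z. K * P.psum z \<le> \<phi>h z) (at_right 0)"
    proof (rule eventually_mono[OF eventually_at_right_less])
      fix z :: real assume z: "0 < z"
      have "K * P.psum z * 1 \<le> K * P.psum z * X z"
        using K P.psum_pos[OF z] X_ge_1[OF z] by (intro mult_left_mono) auto
      then show "K * P.psum z \<le> \<phi>h z" using eq[OF z] by simp
    qed
    ultimately show "filterlim \<phi>h at_top (at_right 0)" by (rule filterlim_at_top_mono)
    have "((\<lambda>z. K * P.psum z * X z) \<longlongrightarrow> K * 0 * exp (C * 0)) at_top"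
      unfolding X_def using assms
      by (intro tendsto_mult tendsto_const P.psum_tendsto_0 tendsto_exp tendsto_neg_powr filterlim_ident) auto
    moreover have "eventually (\<lambda>z. K * P.psum z * X z = \<phi>h z) at_top"
      by (rule eventually_mono[OF eventually_gt_at_top[of 0]]) (simp add: eq)
    ultimately show "(\<phi>h \<longlongrightarrow> 0) at_top" using tendsto_cong by fastforce
  qed
qed

section \<open>Banach's fixed point theorem on \<open>C[0, \<alpha>0]\<close> and \<open>\<M>\<close>\<close>

lemma abs_diff_le_supn_inC:
  assumes "inC \<alpha>0 f" "inC \<alpha>0 g" "x \<in> {0..\<alpha>0}"
  shows "\<bar>f x - g x\<bar> \<le> supn {0..\<alpha>0} (\<lambda>x. f x - g x)"
  unfolding supn_def
proof (rule cSUP_upper[OF assms(3)])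
  have "continuous_on {0..\<alpha>0} (\<lambda>x. \<bar>f x - g x\<bar>)"
    using assms unfolding inC_def by (intro continuous_intros)
  then show "bdd_above ((\<lambda>x. \<bar>f x - g x\<bar>) ` {0..\<alpha>0})"
    by (intro bounded_imp_bdd_above compact_imp_bounded compact_continuous_image) auto
qed

lemma abs_diff_le_supn_inM:
  assumes "inM \<alpha>0 f" "inM \<alpha>0 g" "x \<in> {\<alpha>0..}"
  shows "\<bar>f x - g x\<bar> \<le> supn {\<alpha>0..} (\<lambda>x. f x - g x)"
  unfolding supn_def
proof (rule cSUP_upper[OF assms(3)])
  obtain Bf Bg where "\<forall>y\<in>f ` {\<alpha>0..}. norm y \<le> Bf" "\<forall>y\<in>g ` {\<alpha>0..}. norm y \<le> Bg"
    using assms(1,2) unfolding inM_def bounded_iff by auto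
  then show "bdd_above ((\<lambda>x. \<bar>f x - g x\<bar>) ` {\<alpha>0..})"
    by (intro bdd_aboveI2[of _ _ "Bf + Bg"]) force
qed

lemma supn_le:
  assumes "S \<noteq> {}" "\<And>x. x \<in> S \<Longrightarrow> \<bar>f x\<bar> \<le> c"
  shows "supn S f \<le> c"
  unfolding supn_def using assms by (rule cSUP_least)

lemma eq_on_if_supn_le_contraction:
  assumes "S \<noteq> {}" "k < 1"
    and le_supn: "\<And>x. x \<in> S \<Longrightarrow> \<bar>f x - g x\<bar> \<le> supn S (\<lambda>x. f x - g x)"
    and contr: "\<And>x. x \<in> S \<Longrightarrow> \<bar>f x - g x\<bar> \<le> k * supn S (\<lambda>x. f x - g x)"
  shows "\<forall>x\<in>S. f x = g x"
proof -
  let ?e = "supn S (\<lambda>x. f x - g x)"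
  have "?e \<le> k * ?e" by (rule supn_le[OF assms(1) contr])
  moreover have "?e \<ge> 0" using le_supn assms(1) by (meson abs_ge_zero ex_in_conv order_trans)
  ultimately have "?e \<le> 0" using \<open>k < 1\<close> by (smt (verit) mult_le_cancel_right1)
  then show ?thesis using le_supn by fastforce
qed

lemma supn_diff_le_dist:
  fixes h g :: "real \<Rightarrow>\<^sub>C real"
  assumes "S \<noteq> {}"
  shows "supn S (\<lambda>y. h (c y) - g (c y)) \<le> dist h g"
  by (rule supn_le[OF assms]) (metis dist_bounded dist_real_def)

text \<open>Banach's theorem is applied in the complete space of bounded continuous functions on \<open>\<real>\<close>,
  into which \<open>C[0, \<alpha>0]\<close> and \<open>\<M>\<close> embed by composition with a retraction \<open>r\<close> of \<open>\<real>\<close> onto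
  the domain \<open>D\<close>.\<close>

lemma fixed_point_via_bcontfun:
  fixes T :: "(real \<Rightarrow> real) \<Rightarrow> real \<Rightarrow> real" and r :: "real \<Rightarrow> real"
  assumes k: "0 \<le> k" "k < 1"
    and D: "D \<noteq> {}" "\<And>x. r x \<in> D" "\<And>x. x \<in> D \<Longrightarrow> r x = x"
    and P_cong: "\<And>f g. (\<And>x. x \<in> D \<Longrightarrow> f x = g x) \<Longrightarrow> P f \<longleftrightarrow> P g"
    and P_bcontfun: "\<And>f. P f \<Longrightarrow> (\<lambda>x. f (r x)) \<in> bcontfun"
    and P_closed: "closed {h. P (apply_bcontfun h)}" and P_nonempty: "P base"
    and T_into: "\<And>f. P f \<Longrightarrow> P (T f)"
    and T_lip: "\<And>f g x. P f \<Longrightarrow> P g \<Longrightarrow> x \<in> D \<Longrightarrow> \<bar>T f x - T g x\<bar> \<le> k * supn D (\<lambda>x. f x - g x)"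
  shows "\<exists>f. P f \<and> (\<forall>x\<in>D. f x = T f x)"
proof -
  define S where "S = {h. P (apply_bcontfun h)}"
  define T1 where "T1 h = Bcontfun (\<lambda>x. T (apply_bcontfun h) (r x))" for h
  have T1_apply: "apply_bcontfun (T1 h) = (\<lambda>x. T (apply_bcontfun h) (r x))" if "h \<in> S" for h
    unfolding T1_def using P_bcontfun T_into that Bcontfun_inverse unfolding S_def by blast
  have "\<exists>!h\<in>S. T1 h = h"
  proof (rule Banach_fix[OF _ _ k])
    show "complete S" unfolding S_def using P_closed complete_eq_closed by blast
    have "P (\<lambda>x. base (r x))" using P_cong[of "\<lambda>x. base (r x)" base] D P_nonempty by simp
    then have "Bcontfun (\<lambda>x. base (r x)) \<in> S"
      unfolding S_def using P_bcontfun[OF P_nonempty] by (simp add: Bcontfun_inverse)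
    then show "S \<noteq> {}" by auto
    show "T1 ` S \<subseteq> S"
      using T1_apply P_cong[of "\<lambda>x. T _ (r x)"] T_into D(3) unfolding S_def by auto
    fix h g assume hg: "h \<in> S" "g \<in> S"
    show "dist (T1 h) (T1 g) \<le> k * dist h g"
    proof (rule dist_bound)
      fix x
      have "dist (T1 h x) (T1 g x) \<le> k * supn D (\<lambda>y. apply_bcontfun h (id y) - apply_bcontfun g (id y))"
        using T_lip[of "apply_bcontfun h" "apply_bcontfun g" "r x"] hg D(2)
        unfolding T1_apply[OF hg(1)] T1_apply[OF hg(2)] S_def by (simp add: dist_real_def)
      also have "\<dots> \<le> k * dist h g" using supn_diff_le_dist[OF D(1)] k by (intro mult_left_mono)
      finally show "dist (T1 h x) (T1 g x) \<le> k * dist h g" .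
    qed
  qed
  then obtain h where h: "h \<in> S" "T1 h = h" by auto
  show ?thesis
  proof (intro exI conjI ballI)
    show "P (apply_bcontfun h)" using h(1) unfolding S_def by simp
    fix x assume "x \<in> D"
    then show "apply_bcontfun h x = T (apply_bcontfun h) x"
      using arg_cong[OF h(2), of "\<lambda>h. apply_bcontfun h x"] D(3) unfolding T1_apply[OF h(1)] by simp
  qed
qed

lemma fixed_point_inC:
  fixes T :: "(real \<Rightarrow> real) \<Rightarrow> (real \<Rightarrow> real)"
  assumes "\<alpha>0 > 0" "0 \<le> k" "k < 1"
    and "\<And>f. inC \<alpha>0 f \<Longrightarrow> inC \<alpha>0 (T f)"
    and "\<And>f g \<eta>. inC \<alpha>0 f \<Longrightarrow> inC \<alpha>0 g \<Longrightarrow> \<eta> \<in> {0..\<alpha>0} \<Longrightarrow>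
        \<bar>T f \<eta> - T g \<eta>\<bar> \<le> k * supn {0..\<alpha>0} (\<lambda>x. f x - g x)"
  shows "\<exists>f. inC \<alpha>0 f \<and> (\<forall>\<eta>\<in>{0..\<alpha>0}. f \<eta> = T f \<eta>)"
proof (rule fixed_point_via_bcontfun[where r = "\<lambda>x. max 0 (min \<alpha>0 x)" and base = "\<lambda>_. 0"])
  show "(\<lambda>x. f (max 0 (min \<alpha>0 x))) \<in> bcontfun" if "inC \<alpha>0 f" for f
  proof -
    have "continuous_on UNIV (\<lambda>x. f (max 0 (min \<alpha>0 x)))"
      by (rule continuous_on_compose2[OF that[unfolded inC_def]], intro continuous_intros)
         (use assms(1) in auto)
    moreover have "bounded (f ` {0..\<alpha>0})"
      using that unfolding inC_def by (intro compact_imp_bounded compact_continuous_image) auto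
    then have "bounded (range (\<lambda>x. f (max 0 (min \<alpha>0 x))))"
      by (rule bounded_subset) (use assms(1) in auto)
    ultimately show ?thesis unfolding bcontfun_def by auto
  qed
  show "closed {h. inC \<alpha>0 (apply_bcontfun h)}"
    unfolding inC_def using continuous_on_subset[OF continuous_on_apply_bcontfun] by simp
  show "inC \<alpha>0 f \<longleftrightarrow> inC \<alpha>0 g" if "\<And>x. x \<in> {0..\<alpha>0} \<Longrightarrow> f x = g x" for f g
    unfolding inC_def using that by (rule continuous_on_cong[OF refl])
  show "inC \<alpha>0 (\<lambda>_. 0)" unfolding inC_def by simp
qed (use assms in auto)

lemma tendsto_apply_bcontfun:
  fixes x :: "nat \<Rightarrow> real \<Rightarrow>\<^sub>C real"
  assumes "x \<longlonglongrightarrow> l"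
  shows "(\<lambda>n. apply_bcontfun (x n) t) \<longlonglongrightarrow> apply_bcontfun l t"
  using assms unfolding tendsto_iff
  by (auto elim!: eventually_mono intro: dist_fun_lt_imp_dist_val_lt)

lemma closed_inM: "closed {h :: real \<Rightarrow>\<^sub>C real. inM \<alpha>0 (apply_bcontfun h)}"
proof (rule closed_sequential_limits[THEN iffD2], intro allI impI, elim conjE)
  fix x :: "nat \<Rightarrow> real \<Rightarrow>\<^sub>C real" and l
  assume "\<forall>n. x n \<in> {h. inM \<alpha>0 (apply_bcontfun h)}" and lim: "x \<longlonglongrightarrow> l"
  then have xM: "inM \<alpha>0 (apply_bcontfun (x n))" for n by auto
  have "(\<lambda>n. apply_bcontfun (x n) \<alpha>0) \<longlonglongrightarrow> apply_bcontfun l \<alpha>0" by (rule tendsto_apply_bcontfun[OF lim])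
  moreover have "(\<lambda>n. apply_bcontfun (x n) \<alpha>0) = (\<lambda>n. 0)" using xM by (simp add: inM_def)
  ultimately have "l \<alpha>0 = 0" using LIMSEQ_unique by (metis tendsto_const)
  moreover have "(apply_bcontfun l \<longlongrightarrow> -1) at_top"
    unfolding tendsto_iff
  proof (intro allI impI)
    fix e :: real assume e: "e > 0"
    obtain N where N: "dist (x N) l < e/2"
      using lim e unfolding tendsto_iff eventually_sequentially by (metis half_gt_zero order_refl)
    have "eventually (\<lambda>t. dist (apply_bcontfun (x N) t) (-1) < e/2) at_top"
      using xM[of N] e unfolding inM_def tendsto_iff by (meson half_gt_zero)
    then show "eventually (\<lambda>t. dist (apply_bcontfun l t) (-1) < e) at_top"
    proof eventually_elim
      case (elim t)
      have "dist (apply_bcontfun l t) (-1)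
          \<le> dist (apply_bcontfun l t) (apply_bcontfun (x N) t) + dist (apply_bcontfun (x N) t) (-1)"
        by (rule dist_triangle)
      also have "\<dots> < e/2 + e/2"
        using dist_fun_lt_imp_dist_val_lt[OF N, of t] elim by (simp add: dist_commute)
      finally show ?case by simp
    qed
  qed
  ultimately show "l \<in> {h. inM \<alpha>0 (apply_bcontfun h)}"
    unfolding inM_def by (auto intro: bounded_subset[OF bounded_apply_bcontfun])
qed

lemma inM_cong:
  assumes "\<And>x. x \<ge> \<alpha>0 \<Longrightarrow> f x = g x"
  shows "inM \<alpha>0 f \<longleftrightarrow> inM \<alpha>0 g"
proof -
  have "eventually (\<lambda>x. f x = g x) at_top"
    by (rule eventually_mono[OF eventually_ge_at_top[of \<alpha>0]]) (use assms in auto)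
  then have "(f \<longlongrightarrow> -1) at_top \<longleftrightarrow> (g \<longlongrightarrow> -1) at_top" by (rule tendsto_cong)
  moreover have "continuous_on {\<alpha>0..} f \<longleftrightarrow> continuous_on {\<alpha>0..} g"
    using assms by (intro continuous_on_cong) auto
  moreover have "f ` {\<alpha>0..} = g ` {\<alpha>0..}" using assms by auto
  ultimately show ?thesis unfolding inM_def using assms[of \<alpha>0] by auto
qed

lemma fixed_point_inM:
  fixes T :: "(real \<Rightarrow> real) \<Rightarrow> (real \<Rightarrow> real)"
  assumes "0 \<le> k" "k < 1"
    and "\<And>f. inM \<alpha>0 f \<Longrightarrow> inM \<alpha>0 (T f)"
    and "\<And>f g \<xi>. inM \<alpha>0 f \<Longrightarrow> inM \<alpha>0 g \<Longrightarrow> \<xi> \<in> {\<alpha>0..} \<Longrightarrow>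
        \<bar>T f \<xi> - T g \<xi>\<bar> \<le> k * supn {\<alpha>0..} (\<lambda>x. f x - g x)"
  shows "\<exists>f. inM \<alpha>0 f \<and> (\<forall>\<xi>\<in>{\<alpha>0..}. f \<xi> = T f \<xi>)"
proof (rule fixed_point_via_bcontfun[where r = "max \<alpha>0" and base = "\<lambda>x. - min 1 (max 0 (x - \<alpha>0))"])
  show "(\<lambda>x. f (max \<alpha>0 x)) \<in> bcontfun" if "inM \<alpha>0 f" for f
  proof -
    have "continuous_on UNIV (\<lambda>x. f (max \<alpha>0 x))"
      by (rule continuous_on_compose2[OF _ continuous_on_max[OF continuous_on_const continuous_on_id]])
         (use that in \<open>auto simp: inM_def\<close>)
    moreover have "bounded (range (\<lambda>x. f (max \<alpha>0 x)))"
      by (rule bounded_subset[of "f ` {\<alpha>0..}"]) (use that in \<open>auto simp: inM_def\<close>)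
    ultimately show ?thesis unfolding bcontfun_def by auto
  qed
  show "inM \<alpha>0 (\<lambda>x. - min 1 (max 0 (x - \<alpha>0)))" unfolding inM_def
  proof (intro conjI)
    show "bounded ((\<lambda>x. - min 1 (max 0 (x - \<alpha>0))) ` {\<alpha>0..})"
      unfolding bounded_iff by (intro exI[of _ 1]) auto
    show "((\<lambda>x. - min 1 (max 0 (x - \<alpha>0))) \<longlongrightarrow> -1) at_top"
      by (rule tendsto_eventually, rule eventually_mono[OF eventually_ge_at_top[of "\<alpha>0+1"]]) auto
    show "continuous_on {\<alpha>0..} (\<lambda>x. - min 1 (max 0 (x - \<alpha>0)))" by (intro continuous_intros)
  qed simp
  show "inM \<alpha>0 f \<longleftrightarrow> inM \<alpha>0 g" if "\<And>x. x \<in> {\<alpha>0..} \<Longrightarrow> f x = g x" for f g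
    using that by (intro inM_cong) auto
qed (use assms closed_inM in auto)

lemma supn_nonneg_inC: "inC \<alpha>0 f \<Longrightarrow> inC \<alpha>0 g \<Longrightarrow> \<alpha>0 \<ge> 0 \<Longrightarrow> supn {0..\<alpha>0} (\<lambda>x. f x - g x) \<ge> 0"
  using abs_diff_le_supn_inC[of \<alpha>0 f g 0] by auto

lemma supn_nonneg_inM: "inM \<alpha>0 f \<Longrightarrow> inM \<alpha>0 g \<Longrightarrow> supn {\<alpha>0..} (\<lambda>x. f x - g x) \<ge> 0"
  using abs_diff_le_supn_inM[of \<alpha>0 f g \<alpha>0] by auto

lemma contraction_pair_unique_fixed_point:
  fixes U W :: "(real \<Rightarrow> real) \<Rightarrow> real \<Rightarrow> real"
  assumes \<alpha>0: "\<alpha>0 > 0" and k: "0 \<le> k1" "k1 < 1" "0 \<le> k2" "k2 < 1"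
    and U_inC: "\<And>f. inC \<alpha>0 f \<Longrightarrow> inC \<alpha>0 (U f)"
    and U_lip: "\<And>f g \<eta>. inC \<alpha>0 f \<Longrightarrow> inC \<alpha>0 g \<Longrightarrow> \<eta> \<in> {0..\<alpha>0} \<Longrightarrow>
        \<bar>U f \<eta> - U g \<eta>\<bar> \<le> k1 * supn {0..\<alpha>0} (\<lambda>x. f x - g x)"
    and W_inM: "\<And>f. inM \<alpha>0 f \<Longrightarrow> inM \<alpha>0 (W f)"
    and W_lip: "\<And>f g \<xi>. inM \<alpha>0 f \<Longrightarrow> inM \<alpha>0 g \<Longrightarrow> \<xi> \<in> {\<alpha>0..} \<Longrightarrow>
        \<bar>W f \<xi> - W g \<xi>\<bar> \<le> k2 * supn {\<alpha>0..} (\<lambda>x. f x - g x)"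
  shows "(\<forall>f1 f2. inC \<alpha>0 f1 \<and> inM \<alpha>0 f2 \<longrightarrow> inC \<alpha>0 (U f1) \<and> inM \<alpha>0 (W f2)) \<and>
    (\<exists>k. 0 \<le> k \<and> k < 1 \<and>
      (\<forall>f1 f2 g1 g2. inC \<alpha>0 f1 \<and> inM \<alpha>0 f2 \<and> inC \<alpha>0 g1 \<and> inM \<alpha>0 g2 \<longrightarrow>
         max (supn {0..\<alpha>0} (\<lambda>x. U f1 x - U g1 x)) (supn {\<alpha>0..} (\<lambda>x. W f2 x - W g2 x))
         \<le> k * max (supn {0..\<alpha>0} (\<lambda>x. f1 x - g1 x)) (supn {\<alpha>0..} (\<lambda>x. f2 x - g2 x)))) \<and>
    (\<exists>f1 f2. inC \<alpha>0 f1 \<and> inM \<alpha>0 f2 \<and>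
      (\<forall>\<eta>\<in>{0..\<alpha>0}. f1 \<eta> = U f1 \<eta>) \<and> (\<forall>\<xi>\<in>{\<alpha>0..}. f2 \<xi> = W f2 \<xi>) \<and>
      (\<forall>g1 g2. inC \<alpha>0 g1 \<and> inM \<alpha>0 g2 \<and>
         (\<forall>\<eta>\<in>{0..\<alpha>0}. g1 \<eta> = U g1 \<eta>) \<and> (\<forall>\<xi>\<in>{\<alpha>0..}. g2 \<xi> = W g2 \<xi>) \<longrightarrow>
         (\<forall>\<eta>\<in>{0..\<alpha>0}. g1 \<eta> = f1 \<eta>) \<and> (\<forall>\<xi>\<in>{\<alpha>0..}. g2 \<xi> = f2 \<xi>)))"
proof (intro conjI)
  show "\<forall>f1 f2. inC \<alpha>0 f1 \<and> inM \<alpha>0 f2 \<longrightarrow> inC \<alpha>0 (U f1) \<and> inM \<alpha>0 (W f2)"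
    using U_inC W_inM by blast
  have supn_U: "supn {0..\<alpha>0} (\<lambda>x. U f x - U g x) \<le> k1 * supn {0..\<alpha>0} (\<lambda>x. f x - g x)"
    if "inC \<alpha>0 f" "inC \<alpha>0 g" for f g
    by (rule supn_le) (use \<alpha>0 U_lip[OF that] in auto)
  have supn_W: "supn {\<alpha>0..} (\<lambda>x. W f x - W g x) \<le> k2 * supn {\<alpha>0..} (\<lambda>x. f x - g x)"
    if "inM \<alpha>0 f" "inM \<alpha>0 g" for f g
    by (rule supn_le) (use W_lip[OF that] in auto)
  show "\<exists>k. 0 \<le> k \<and> k < 1 \<and>
      (\<forall>f1 f2 g1 g2. inC \<alpha>0 f1 \<and> inM \<alpha>0 f2 \<and> inC \<alpha>0 g1 \<and> inM \<alpha>0 g2 \<longrightarrow>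
         max (supn {0..\<alpha>0} (\<lambda>x. U f1 x - U g1 x)) (supn {\<alpha>0..} (\<lambda>x. W f2 x - W g2 x))
         \<le> k * max (supn {0..\<alpha>0} (\<lambda>x. f1 x - g1 x)) (supn {\<alpha>0..} (\<lambda>x. f2 x - g2 x)))"
  proof (intro exI[of _ "max k1 k2"] conjI allI impI)
    fix f1 f2 g1 g2 assume f: "inC \<alpha>0 f1 \<and> inM \<alpha>0 f2 \<and> inC \<alpha>0 g1 \<and> inM \<alpha>0 g2"
    then have "supn {0..\<alpha>0} (\<lambda>x. f1 x - g1 x) \<ge> 0" "supn {\<alpha>0..} (\<lambda>x. f2 x - g2 x) \<ge> 0"
      using supn_nonneg_inC supn_nonneg_inM \<alpha>0 by auto
    then show "max (supn {0..\<alpha>0} (\<lambda>x. U f1 x - U g1 x)) (supn {\<alpha>0..} (\<lambda>x. W f2 x - W g2 x))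
        \<le> max k1 k2 * max (supn {0..\<alpha>0} (\<lambda>x. f1 x - g1 x)) (supn {\<alpha>0..} (\<lambda>x. f2 x - g2 x))"
      using supn_U[of f1 g1] supn_W[of f2 g2] f k
      by (intro max.boundedI) (auto intro: order_trans[OF _ mult_mono])
  qed (use k in auto)
  obtain f1 where f1: "inC \<alpha>0 f1" "\<forall>\<eta>\<in>{0..\<alpha>0}. f1 \<eta> = U f1 \<eta>"
    using fixed_point_inC[OF \<alpha>0 k(1,2) U_inC U_lip] by blast
  obtain f2 where f2: "inM \<alpha>0 f2" "\<forall>\<xi>\<in>{\<alpha>0..}. f2 \<xi> = W f2 \<xi>"
    using fixed_point_inM[OF k(3,4) W_inM W_lip] by blast
  have "(\<forall>\<eta>\<in>{0..\<alpha>0}. g1 \<eta> = f1 \<eta>) \<and> (\<forall>\<xi>\<in>{\<alpha>0..}. g2 \<xi> = f2 \<xi>)"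
    if g: "inC \<alpha>0 g1" "inM \<alpha>0 g2" "\<forall>\<eta>\<in>{0..\<alpha>0}. g1 \<eta> = U g1 \<eta>" "\<forall>\<xi>\<in>{\<alpha>0..}. g2 \<xi> = W g2 \<xi>"
    for g1 g2
  proof
    show "\<forall>\<eta>\<in>{0..\<alpha>0}. g1 \<eta> = f1 \<eta>"
      by (rule eq_on_if_supn_le_contraction[OF _ k(2) abs_diff_le_supn_inC[OF g(1) f1(1)]])
         (use \<alpha>0 g(3) f1(2) U_lip[OF g(1) f1(1)] in auto)
    show "\<forall>\<xi>\<in>{\<alpha>0..}. g2 \<xi> = f2 \<xi>"
      by (rule eq_on_if_supn_le_contraction[OF _ k(4) abs_diff_le_supn_inM[OF g(2) f2(1)]])
         (use g(4) f2(2) W_lip[OF g(2) f2(1)] in auto)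
  qed
  with f1 f2 show "\<exists>f1 f2. inC \<alpha>0 f1 \<and> inM \<alpha>0 f2 \<and>
      (\<forall>\<eta>\<in>{0..\<alpha>0}. f1 \<eta> = U f1 \<eta>) \<and> (\<forall>\<xi>\<in>{\<alpha>0..}. f2 \<xi> = W f2 \<xi>) \<and>
      (\<forall>g1 g2. inC \<alpha>0 g1 \<and> inM \<alpha>0 g2 \<and>
         (\<forall>\<eta>\<in>{0..\<alpha>0}. g1 \<eta> = U g1 \<eta>) \<and> (\<forall>\<xi>\<in>{\<alpha>0..}. g2 \<xi> = W g2 \<xi>) \<longrightarrow>
         (\<forall>\<eta>\<in>{0..\<alpha>0}. g1 \<eta> = f1 \<eta>) \<and> (\<forall>\<xi>\<in>{\<alpha>0..}. g2 \<xi> = f2 \<xi>))"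
    by blast
qed

section \<open>The operators \<open>U\<close> and \<open>W\<close>\<close>

locale inner_hypotheses =
  fixes a \<mu> \<nu> L1m L1M N1m N1M L1b N1b :: real and L1 N1 :: "real \<Rightarrow> (real \<Rightarrow> real) \<Rightarrow> real \<Rightarrow> real"
  assumes params: "a > 0" "\<mu> > max 1 \<nu>" "\<nu> > 0" "L1m > 0" "N1m > 0" "N1M > 0" "L1b \<ge> 0" "N1b \<ge> 0"
    and continuous: "\<forall>\<alpha>0>0. \<forall>f. inC \<alpha>0 f \<longrightarrow>
        continuous_on {0<..\<alpha>0} (L1 \<alpha>0 f) \<and> continuous_on {0<..\<alpha>0} (N1 \<alpha>0 f)"
    and bounds: "\<forall>\<alpha>0>0. \<forall>f. inC \<alpha>0 f \<longrightarrow> (\<forall>\<eta>\<in>{0<..\<alpha>0}.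
        L1m * \<eta> powr (-\<mu>) \<le> L1 \<alpha>0 f \<eta> \<and> L1 \<alpha>0 f \<eta> \<le> L1M * \<eta> powr (-\<mu>) \<and>
        N1m * \<eta> powr (-\<nu>) \<le> N1 \<alpha>0 f \<eta> \<and> N1 \<alpha>0 f \<eta> \<le> N1M * \<eta> powr (-\<nu>))"
    and lipschitz: "\<forall>\<alpha>0>0. \<forall>f g. inC \<alpha>0 f \<longrightarrow> inC \<alpha>0 g \<longrightarrow> (\<forall>s\<in>{0<..\<alpha>0}.
        \<bar>L1 \<alpha>0 f s - L1 \<alpha>0 g s\<bar> \<le> L1b * supn {0..\<alpha>0} (\<lambda>x. f x - g x) \<and>
        \<bar>N1 \<alpha>0 f s - N1 \<alpha>0 g s\<bar> \<le> N1b * supn {0..\<alpha>0} (\<lambda>x. f x - g x))"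
begin

lemma inner_coeffs:
  assumes "\<alpha>0 > 0" "inC \<alpha>0 f"
  shows "inner_coeffs a \<alpha>0 \<mu> \<nu> L1m N1M (L1 \<alpha>0 f) (N1 \<alpha>0 f)"
proof
  fix s assume s: "s \<in> {0<..\<alpha>0}"
  show "L1m * s powr (-\<mu>) \<le> L1 \<alpha>0 f s" using bounds assms s by blast
  have "0 \<le> N1m * s powr (-\<nu>)" using params by simp
  then show "0 \<le> N1 \<alpha>0 f s \<and> N1 \<alpha>0 f s \<le> N1M * s powr (-\<nu>)"
    using bounds assms s by (meson order_trans)
qed (use params continuous assms in auto)

lemma Uop_inC: "\<alpha>0 > 0 \<Longrightarrow> inC \<alpha>0 f \<Longrightarrow> inC \<alpha>0 (Uop D a \<alpha>0 L1 N1 f)"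
  unfolding inC_def Uop_def[abs_def]
  by (intro continuous_intros inner_coeffs.continuous_on_F1[OF inner_coeffs]) (auto simp: inC_def)

lemma Uop_lipschitz:
  assumes "\<alpha>0 > 0" "D \<ge> 0" "inC \<alpha>0 f" "inC \<alpha>0 g" "\<eta> \<in> {0..\<alpha>0}"
  shows "\<bar>Uop D a \<alpha>0 L1 N1 f \<eta> - Uop D a \<alpha>0 L1 N1 g \<eta>\<bar>
    \<le> phi D a \<mu> \<nu> L1m N1M L1b N1b \<alpha>0 * supn {0..\<alpha>0} (\<lambda>x. f x - g x)"
proof -
  define d where "d = supn {0..\<alpha>0} (\<lambda>x. f x - g x)"
  interpret inner_coeffs_pair a \<alpha>0 \<mu> \<nu> L1m N1M "L1 \<alpha>0 f" "N1 \<alpha>0 f" "L1 \<alpha>0 g" "N1 \<alpha>0 g" L1b N1b d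
    using inner_coeffs[OF assms(1,3)] inner_coeffs[OF assms(1,4)] lipschitz assms params
      supn_nonneg_inC[OF assms(3,4)]
    by (simp add: inner_coeffs_pair_def inner_coeffs_pair_axioms_def d_def)
  let ?F = "F1 a \<alpha>0 (L1 \<alpha>0 f) (N1 \<alpha>0 f)" and ?G = "F1 a \<alpha>0 (L1 \<alpha>0 g) (N1 \<alpha>0 g)"
  have "Uop D a \<alpha>0 L1 N1 f \<eta> - Uop D a \<alpha>0 L1 N1 g \<eta> = D * ((?F \<alpha>0 - ?G \<alpha>0) - (?F \<eta> - ?G \<eta>))"
    unfolding Uop_def by (simp add: algebra_simps)
  then have "\<bar>Uop D a \<alpha>0 L1 N1 f \<eta> - Uop D a \<alpha>0 L1 N1 g \<eta>\<bar> = D * \<bar>(?F \<alpha>0 - ?G \<alpha>0) - (?F \<eta> - ?G \<eta>)\<bar>"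
    using assms(2) by (simp add: abs_mult)
  also have "\<dots> \<le> D * (\<bar>?F \<alpha>0 - ?G \<alpha>0\<bar> + \<bar>?F \<eta> - ?G \<eta>\<bar>)"
    using assms(2) by (intro mult_left_mono abs_triangle_ineq4) auto
  also have "\<dots> \<le> D * (Fbar1 a \<mu> \<nu> L1m N1M L1b N1b \<alpha>0 * d + Fbar1 a \<mu> \<nu> L1m N1M L1b N1b \<alpha>0 * d)"
    using assms F1_diff_le[of \<alpha>0] F1_diff_le[of \<eta>] by (intro mult_left_mono add_mono) auto
  finally show ?thesis unfolding phi_def d_def by simp
qed

end

locale outer_hypotheses =
  fixes a \<beta> \<sigma> L2m L2M N2m N2M L2b N2b :: real and L2 N2 :: "real \<Rightarrow> (real \<Rightarrow> real) \<Rightarrow> real \<Rightarrow> real"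
  assumes params: "a > 0" "\<sigma> > 0" "\<beta> > \<sigma> + 2" "L2m > 0" "L2M > 0" "N2m > 0" "N2M > 0"
      "L2b \<ge> 0" "N2b \<ge> 0"
    and continuous: "\<forall>\<alpha>0>0. \<forall>f. inM \<alpha>0 f \<longrightarrow>
        continuous_on {\<alpha>0..} (L2 \<alpha>0 f) \<and> continuous_on {\<alpha>0..} (N2 \<alpha>0 f)"
    and bounds: "\<forall>\<alpha>0>0. \<forall>f. inM \<alpha>0 f \<longrightarrow> (\<forall>\<xi>\<in>{\<alpha>0..}.
        L2m * \<xi> powr \<beta> \<le> L2 \<alpha>0 f \<xi> \<and> L2 \<alpha>0 f \<xi> \<le> L2M * \<xi> powr \<beta> \<and>
        N2m * \<xi> powr \<sigma> \<le> N2 \<alpha>0 f \<xi> \<and> N2 \<alpha>0 f \<xi> \<le> N2M * \<xi> powr \<sigma>)"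
    and lipschitz: "\<forall>\<alpha>0>0. \<forall>f g. inM \<alpha>0 f \<longrightarrow> inM \<alpha>0 g \<longrightarrow> (\<forall>s\<in>{\<alpha>0..}.
        \<bar>L2 \<alpha>0 f s - L2 \<alpha>0 g s\<bar> \<le> L2b * supn {\<alpha>0..} (\<lambda>x. f x - g x) \<and>
        \<bar>N2 \<alpha>0 f s - N2 \<alpha>0 g s\<bar> \<le> N2b * supn {\<alpha>0..} (\<lambda>x. f x - g x))"
begin

lemma outer_coeffs:
  assumes "\<alpha>0 > 0" "inM \<alpha>0 f"
  shows "outer_coeffs a \<alpha>0 \<beta> \<sigma> L2m L2M N2M (L2 \<alpha>0 f) (N2 \<alpha>0 f)"
proof
  fix s assume s: "s \<ge> \<alpha>0"
  show "L2m * s powr \<beta> \<le> L2 \<alpha>0 f s \<and> L2 \<alpha>0 f s \<le> L2M * s powr \<beta>" using bounds assms s by auto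
  have "0 \<le> N2m * s powr \<sigma>" using params by simp
  then show "0 \<le> N2 \<alpha>0 f s \<and> N2 \<alpha>0 f s \<le> N2M * s powr \<sigma>"
    using bounds assms s by (meson atLeast_iff order_trans)
qed (use params continuous assms in auto)

lemma Wop_eq: "Wop a \<alpha>0 L2 N2 f = (\<lambda>\<xi>. - F2 a \<alpha>0 (L2 \<alpha>0 f) (N2 \<alpha>0 f) \<xi> / F2inf a \<alpha>0 (L2 \<alpha>0 f) (N2 \<alpha>0 f))"
  by (rule ext) (simp add: Wop_def)

lemma Wop_inM: "\<alpha>0 > 0 \<Longrightarrow> inM \<alpha>0 f \<Longrightarrow> inM \<alpha>0 (Wop a \<alpha>0 L2 N2 f)"
  unfolding Wop_eq by (rule outer_coeffs.inM_normalized_F2[OF outer_coeffs])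

lemma Wop_lipschitz:
  assumes "\<alpha>0 > 0" "inM \<alpha>0 f" "inM \<alpha>0 g" "\<xi> \<in> {\<alpha>0..}"
  shows "\<bar>Wop a \<alpha>0 L2 N2 f \<xi> - Wop a \<alpha>0 L2 N2 g \<xi>\<bar>
    \<le> phihat a \<beta> \<sigma> L2m L2M N2M L2b N2b \<alpha>0 * supn {\<alpha>0..} (\<lambda>x. f x - g x)"
proof -
  define d where "d = supn {\<alpha>0..} (\<lambda>x. f x - g x)"
  interpret outer_coeffs_pair a \<alpha>0 \<beta> \<sigma> L2m L2M N2M "L2 \<alpha>0 f" "N2 \<alpha>0 f" "L2 \<alpha>0 g" "N2 \<alpha>0 g" L2b N2b d
    using outer_coeffs[OF assms(1,2)] outer_coeffs[OF assms(1,3)] lipschitz assms params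
      supn_nonneg_inM[OF assms(2,3)]
    by (simp add: outer_coeffs_pair_def outer_coeffs_pair_axioms_def d_def)
  have "\<bar>Wop a \<alpha>0 L2 N2 f \<xi> - Wop a \<alpha>0 L2 N2 g \<xi>\<bar> \<le> 2 * kernel_dev_int / U.F2inf_lower_bound"
    using normalized_F2_diff_le[of \<xi>] assms(4) by (simp add: Wop_eq)
  also have "\<dots> = phihat a \<beta> \<sigma> L2m L2M N2M L2b N2b \<alpha>0 * d" by (rule normalized_F2_diff_bound_eq)
  finally show ?thesis unfolding d_def .
qed

end

theorem theorem1:
  fixes a Q0 lam0 \<theta>m :: real
    and \<mu> \<nu> \<beta> \<sigma> L1m L1M N1m N1M L2m L2M N2m N2M L1b N1b L2b N2b :: real
    and L1 N1 L2 N2 :: "real \<Rightarrow> (real \<Rightarrow> real) \<Rightarrow> real \<Rightarrow> real"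
  assumes pos: "a > 0" "Q0 > 0" "lam0 > 0" "\<theta>m > 0"
    and H1_consts: "\<mu> > 0" "\<nu> > 0" "\<beta> > 0" "\<sigma> > 0"
      "L1m > 0" "L1M > 0" "N1m > 0" "N1M > 0" "L2m > 0" "L2M > 0" "N2m > 0" "N2M > 0"
      "\<mu> > max 1 \<nu>" "\<beta> > \<sigma> + 2"
    and cont1: "\<forall>\<alpha>0>0. \<forall>f. inC \<alpha>0 f \<longrightarrow>
        continuous_on {0<..\<alpha>0} (L1 \<alpha>0 f) \<and> continuous_on {0<..\<alpha>0} (N1 \<alpha>0 f)"
    and cont2: "\<forall>\<alpha>0>0. \<forall>f. inM \<alpha>0 f \<longrightarrow>
        continuous_on {\<alpha>0..} (L2 \<alpha>0 f) \<and> continuous_on {\<alpha>0..} (N2 \<alpha>0 f)"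
    and H1_1: "\<forall>\<alpha>0>0. \<forall>f. inC \<alpha>0 f \<longrightarrow> (\<forall>\<eta>\<in>{0<..\<alpha>0}.
        L1m * \<eta> powr (-\<mu>) \<le> L1 \<alpha>0 f \<eta> \<and> L1 \<alpha>0 f \<eta> \<le> L1M * \<eta> powr (-\<mu>) \<and>
        N1m * \<eta> powr (-\<nu>) \<le> N1 \<alpha>0 f \<eta> \<and> N1 \<alpha>0 f \<eta> \<le> N1M * \<eta> powr (-\<nu>))"
    and H1_2: "\<forall>\<alpha>0>0. \<forall>f. inM \<alpha>0 f \<longrightarrow> (\<forall>\<xi>\<in>{\<alpha>0..}.
        L2m * \<xi> powr \<beta> \<le> L2 \<alpha>0 f \<xi> \<and> L2 \<alpha>0 f \<xi> \<le> L2M * \<xi> powr \<beta> \<and>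
        N2m * \<xi> powr \<sigma> \<le> N2 \<alpha>0 f \<xi> \<and> N2 \<alpha>0 f \<xi> \<le> N2M * \<xi> powr \<sigma>)"
    and H2_consts: "L1b \<ge> 0" "N1b \<ge> 0" "L2b \<ge> 0" "N2b \<ge> 0"
    and nondeg: "L1b + N1b > 0" "L2b + N2b > 0"
    and H2_1: "\<forall>\<alpha>0>0. \<forall>f g. inC \<alpha>0 f \<longrightarrow> inC \<alpha>0 g \<longrightarrow> (\<forall>s\<in>{0<..\<alpha>0}.
        \<bar>L1 \<alpha>0 f s - L1 \<alpha>0 g s\<bar> \<le> L1b * supn {0..\<alpha>0} (\<lambda>x. f x - g x) \<and>
        \<bar>N1 \<alpha>0 f s - N1 \<alpha>0 g s\<bar> \<le> N1b * supn {0..\<alpha>0} (\<lambda>x. f x - g x))"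
    and H2_2: "\<forall>\<alpha>0>0. \<forall>f g. inM \<alpha>0 f \<longrightarrow> inM \<alpha>0 g \<longrightarrow> (\<forall>s\<in>{\<alpha>0..}.
        \<bar>L2 \<alpha>0 f s - L2 \<alpha>0 g s\<bar> \<le> L2b * supn {\<alpha>0..} (\<lambda>x. f x - g x) \<and>
        \<bar>N2 \<alpha>0 f s - N2 \<alpha>0 g s\<bar> \<le> N2b * supn {\<alpha>0..} (\<lambda>x. f x - g x))"
  defines "\<phi> \<equiv> phi (Dstar Q0 lam0 \<theta>m) a \<mu> \<nu> L1m N1M L1b N1b"
    and "\<phi>h \<equiv> phihat a \<beta> \<sigma> L2m L2M N2M L2b N2b"
  shows
    "(\<forall>z>0. \<phi>h z > 0) \<and>
     (\<forall>x>0. \<forall>y>x. \<phi>h y < \<phi>h x) \<and>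
     filterlim \<phi>h at_top (at_right 0) \<and> (\<phi>h \<longlongrightarrow> 0) at_top \<and>
     (\<forall>z>0. \<phi> z > 0) \<and>
     (\<forall>x>0. \<forall>y>x. \<phi> x < \<phi> y) \<and>
     (\<phi> \<longlongrightarrow> 0) (at_right 0) \<and> filterlim \<phi> at_top at_top \<and>
     (\<forall>\<alpha>01 \<alpha>02. \<alpha>01 > 0 \<and> \<phi>h \<alpha>01 = 1 \<and> \<alpha>02 > 0 \<and> \<phi> \<alpha>02 = 1 \<and>
        Q0 < 2 * pi * lam0 * \<theta>m / Fbar1 a \<mu> \<nu> L1m N1M L1b N1b \<alpha>01 \<longrightarrow>
        \<alpha>01 < \<alpha>02 \<and>
        (\<forall>\<alpha>0\<in>{\<alpha>01<..<\<alpha>02}.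
           \<comment> \<open>Psi maps K = C[0,alpha0] x M into itself\<close>
           (\<forall>f1 f2. inC \<alpha>0 f1 \<and> inM \<alpha>0 f2 \<longrightarrow>
              inC \<alpha>0 (Uop (Dstar Q0 lam0 \<theta>m) a \<alpha>0 L1 N1 f1) \<and> inM \<alpha>0 (Wop a \<alpha>0 L2 N2 f2)) \<and>
           \<comment> \<open>Psi is a contraction for the max-norm\<close>
           (\<exists>k. 0 \<le> k \<and> k < 1 \<and>
              (\<forall>f1 f2 g1 g2. inC \<alpha>0 f1 \<and> inM \<alpha>0 f2 \<and> inC \<alpha>0 g1 \<and> inM \<alpha>0 g2 \<longrightarrow>
                 max (supn {0..\<alpha>0} (\<lambda>x. Uop (Dstar Q0 lam0 \<theta>m) a \<alpha>0 L1 N1 f1 x - Uop (Dstar Q0 lam0 \<theta>m) a \<alpha>0 L1 N1 g1 x))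
                     (supn {\<alpha>0..} (\<lambda>x. Wop a \<alpha>0 L2 N2 f2 x - Wop a \<alpha>0 L2 N2 g2 x))
                 \<le> k * max (supn {0..\<alpha>0} (\<lambda>x. f1 x - g1 x)) (supn {\<alpha>0..} (\<lambda>x. f2 x - g2 x)))) \<and>
           \<comment> \<open>unique fixed point in K (functions identified on their domains)\<close>
           (\<exists>f1 f2. inC \<alpha>0 f1 \<and> inM \<alpha>0 f2 \<and>
              (\<forall>\<eta>\<in>{0..\<alpha>0}. f1 \<eta> = Uop (Dstar Q0 lam0 \<theta>m) a \<alpha>0 L1 N1 f1 \<eta>) \<and>
              (\<forall>\<xi>\<in>{\<alpha>0..}. f2 \<xi> = Wop a \<alpha>0 L2 N2 f2 \<xi>) \<and>
              (\<forall>g1 g2. inC \<alpha>0 g1 \<and> inM \<alpha>0 g2 \<and>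
                 (\<forall>\<eta>\<in>{0..\<alpha>0}. g1 \<eta> = Uop (Dstar Q0 lam0 \<theta>m) a \<alpha>0 L1 N1 g1 \<eta>) \<and>
                 (\<forall>\<xi>\<in>{\<alpha>0..}. g2 \<xi> = Wop a \<alpha>0 L2 N2 g2 \<xi>) \<longrightarrow>
                 (\<forall>\<eta>\<in>{0..\<alpha>0}. g1 \<eta> = f1 \<eta>) \<and> (\<forall>\<xi>\<in>{\<alpha>0..}. g2 \<xi> = f2 \<xi>)))))"
proof -
  have D: "Dstar Q0 lam0 \<theta>m > 0" unfolding Dstar_def using pos by simp
  interpret inner: inner_hypotheses a \<mu> \<nu> L1m L1M N1m N1M L1b N1b L1 N1
    using pos H1_consts H2_consts cont1 H1_1 H2_1 by unfold_locales auto
  interpret outer: outer_hypotheses a \<beta> \<sigma> L2m L2M N2m N2M L2b N2b L2 N2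
    using pos H1_consts H2_consts cont2 H1_2 H2_2 by unfold_locales auto
  have \<phi>h: "(\<forall>z>0. \<phi>h z > 0) \<and> (\<forall>x>0. \<forall>y>x. \<phi>h y < \<phi>h x) \<and> filterlim \<phi>h at_top (at_right 0)
      \<and> (\<phi>h \<longlongrightarrow> 0) at_top"
    unfolding \<phi>h_def by (rule phihat_properties) (use pos H1_consts H2_consts nondeg in auto)
  have \<phi>: "(\<forall>z>0. \<phi> z > 0) \<and> (\<forall>x>0. \<forall>y>x. \<phi> x < \<phi> y) \<and> (\<phi> \<longlongrightarrow> 0) (at_right 0)
      \<and> filterlim \<phi> at_top at_top"
    unfolding \<phi>_def by (rule phi_properties) (use pos H1_consts H2_consts nondeg D in auto)
  have \<phi>h_pos: "\<And>z. z > 0 \<Longrightarrow> \<phi>h z > 0" and \<phi>h_decr: "\<And>x y. 0 < x \<Longrightarrow> x < y \<Longrightarrow> \<phi>h y < \<phi>h x"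
    and \<phi>_pos: "\<And>z. z > 0 \<Longrightarrow> \<phi> z > 0" and \<phi>_incr: "\<And>x y. 0 < x \<Longrightarrow> x < y \<Longrightarrow> \<phi> x < \<phi> y"
    using \<phi>h \<phi> by blast+
  show ?thesis (is "_ \<and> _ \<and> _ \<and> _ \<and> _ \<and> _ \<and> _ \<and> _ \<and>
      (\<forall>\<alpha>01 \<alpha>02. ?hyp \<alpha>01 \<alpha>02 \<longrightarrow> _ \<and> (\<forall>\<alpha>0\<in>_. ?solvable \<alpha>0))")
  proof -
    have solvable: "?solvable \<alpha>0" if "\<alpha>0 > 0" "\<phi> \<alpha>0 < 1" "\<phi>h \<alpha>0 < 1" for \<alpha>0
      by (rule contraction_pair_unique_fixed_point[of \<alpha>0 "\<phi> \<alpha>0" "\<phi>h \<alpha>0"])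
         (use that \<phi>_pos \<phi>h_pos inner.Uop_inC outer.Wop_inM inner.Uop_lipschitz[OF that(1) less_imp_le[OF D]]
            outer.Wop_lipschitz[OF that(1)] in \<open>auto simp: \<phi>_def \<phi>h_def less_imp_le\<close>)
    have "\<forall>\<alpha>01 \<alpha>02. ?hyp \<alpha>01 \<alpha>02 \<longrightarrow> \<alpha>01 < \<alpha>02 \<and> (\<forall>\<alpha>0\<in>{\<alpha>01<..<\<alpha>02}. ?solvable \<alpha>0)"
    proof (intro allI impI, elim conjE)
      fix \<alpha>01 \<alpha>02
      assume \<alpha>01: "\<alpha>01 > 0" "\<phi>h \<alpha>01 = 1" and \<alpha>02: "\<alpha>02 > 0" "\<phi> \<alpha>02 = 1"
        and Q0: "Q0 < 2 * pi * lam0 * \<theta>m / Fbar1 a \<mu> \<nu> L1m N1M L1b N1b \<alpha>01"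
      have "Fbar1 a \<mu> \<nu> L1m N1M L1b N1b \<alpha>01 > 0"
        using \<phi>_pos[OF \<alpha>01(1)] D unfolding \<phi>_def phi_def by (simp add: zero_less_mult_iff)
      then have "\<phi> \<alpha>01 < \<phi> \<alpha>02"
        using phi_Dstar_less_1[OF pos(2-4) _ Q0] \<alpha>02(2) unfolding \<phi>_def by simp
      then have "\<alpha>01 < \<alpha>02" using \<phi>_incr[OF \<alpha>02(1), of \<alpha>01] by (cases \<alpha>01 \<alpha>02 rule: linorder_cases) auto
      moreover have "?solvable \<alpha>0" if "\<alpha>0 \<in> {\<alpha>01<..<\<alpha>02}" for \<alpha>0
        using that \<alpha>01 \<alpha>02 \<phi>_incr[of \<alpha>0 \<alpha>02] \<phi>h_decr[of \<alpha>01 \<alpha>0] by (intro solvable) auto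
      ultimately show "\<alpha>01 < \<alpha>02 \<and> (\<forall>\<alpha>0\<in>{\<alpha>01<..<\<alpha>02}. ?solvable \<alpha>0)" by blast
    qed
    with \<phi>h \<phi> show ?thesis by (elim conjE) (intro conjI; assumption)
  qed
qed

end
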